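(* Assume that the policies $\mathcal S$ (always activate) and $\emptyset$ (never activate) are unichain in $\mathcal M$. Then: (1) if $\lambda\le-\|r^1-r^0\|_\infty-\tfrac12\,\mathrm{sp}(r^1)\,D(P^1)\,\|P^1-P^0\|_\infty$, then $\mathcal S$ is BO in $\mathcal M(\lambda)$; (2) if $\lambda\ge\|r^1-r^0\|_\infty+\tfrac12\,\mathrm{sp}(r^0)\,D(P^0)\,\|P^1-P^0\|_\infty$, then $\emptyset$ is BO in $\mathcal M(\lambda)$.
   Context: Setting. An MDP is $\mathcal M=(\mathcal S,\{0,1\},(P^a)_a,(r^a)_a)$, finite $\mathcal S$, row-stochastic $P^0,P^1$, rewards $r^0,r^1\in\mathbb R^{\mathcal S}$. A policy is a subset $\pi\subseteq\mathcal S$ of states where action 1 is played, inducing $P^\pi$, $r^\pi$. For $\lambda\in\mathbb R$, $\mathcal M(\lambda)$ has the same transitions and rewards $r^1-\lambda\mathbf 1$ (action 1), $r^0$ (action 0). For a unichain policy, gain and bias $b^\pi(\lambda)$ solve $g^\pi\mathbf 1+b^\pi=r^\pi+P^\pi b^\pi$; the activation advantage is $\alpha^\pi_s(\lambda)=r^1_s-\lambda-r^0_s+(P^1_{s,\cdot}-P^0_{s,\cdot})\cdot b^\pi(\lambda)$. A policy is BO (bias optimal) in $\mathcal M(\lambda)$ if it is gain optimal and bias-maximal among gain-optimal policies; for unichain MDPs, $\pi$ is BO iff $\alpha^\pi_s(\lambda)\ge0$ for $s\in\pi$ and $\le0$ for $s\notin\pi$. $\mathrm{sp}(v)=\max_s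 v_s-\min_s v_s$; for vectors $\|v\|_\infty=\max_s|v_s|$; for matrices $\|A\|_\infty=\max_s\sum_{s'}|A_{s,s'}|$. The diameter of a unichain stochastic matrix $P$ with recurrent class $\mathcal S_r$ is $D(P)=\max_{s\in\mathcal S,s'\in\mathcal S_r}\mathbb E^P[\tau_{s,s'}]$, where $\tau_{s,s'}$ is the number of steps to reach $s'$ from $s$. *)

theory Defs
  imports "HOL-Analysis.Analysis"
begin

definition stochastic :: "('s::finite \<Rightarrow> 's \<Rightarrow> real) \<Rightarrow> bool" where
  "stochastic P \<longleftrightarrow> (\<forall>s s'. 0 \<le> P s s') \<and> (\<forall>s. (\<Sum>s'\<in>UNIV. P s s') = 1)"

fun nstep :: "('s::finite \<Rightarrow> 's \<Rightarrow> real) \<Rightarrow> nat \<Rightarrow> 's \<Rightarrow> 's \<Rightarrow> real" where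
  "nstep P 0 s s' = (if s = s' then 1 else 0)"
| "nstep P (Suc n) s s' = (\<Sum>u\<in>UNIV. nstep P n s u * P u s')"

definition reach :: "('s::finite \<Rightarrow> 's \<Rightarrow> real) \<Rightarrow> 's \<Rightarrow> 's \<Rightarrow> bool" where
  "reach P s t \<longleftrightarrow> (\<exists>n. nstep P n s t > 0)"

definition recurrent :: "('s::finite \<Rightarrow> 's \<Rightarrow> real) \<Rightarrow> 's \<Rightarrow> bool" where
  "recurrent P s \<longleftrightarrow> (\<forall>t. reach P s t \<longrightarrow> reach P t s)"

text \<open>Unichain: exactly one recurrent class (plus possibly transient states).\<close>
definition unichain :: "('s::finite \<Rightarrow> 's \<Rightarrow> real) \<Rightarrow> bool" where
  "unichain P \<longleftrightarrow> (\<exists>s. recurrent P s) \<and>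
     (\<forall>s t. recurrent P s \<and> recurrent P t \<longrightarrow> reach P s t)"

text \<open>avoid P s' n s = probability that the chain started at s has not visited s'
  at times 0,...,n, i.e. Pr(tau_{s,s'} > n).\<close>
fun avoid :: "('s::finite \<Rightarrow> 's \<Rightarrow> real) \<Rightarrow> 's \<Rightarrow> nat \<Rightarrow> 's \<Rightarrow> real" where
  "avoid P s' 0 s = (if s = s' then 0 else 1)"
| "avoid P s' (Suc n) s = (if s = s' then 0 else (\<Sum>u\<in>UNIV. P s u * avoid P s' n u))"

text \<open>Expected hitting time E[tau_{s,s'}] = sum_n Pr(tau > n), tau = min{t >= 0. X_t = s'}.\<close>
definition hit_time :: "('s::finite \<Rightarrow> 's \<Rightarrow> real) \<Rightarrow> 's \<Rightarrow> 's \<Rightarrow> real" where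
  "hit_time P s s' = (\<Sum>n. avoid P s' n s)"

definition diameter :: "('s::finite \<Rightarrow> 's \<Rightarrow> real) \<Rightarrow> real" where
  "diameter P = Max {hit_time P s s' | s s'. recurrent P s'}"

definition span :: "('s::finite \<Rightarrow> real) \<Rightarrow> real" where
  "span v = Max (range v) - Min (range v)"

definition vnorm :: "('s::finite \<Rightarrow> real) \<Rightarrow> real" where
  "vnorm v = Max (range (\<lambda>s. \<bar>v s\<bar>))"

definition mnorm :: "('s::finite \<Rightarrow> 's \<Rightarrow> real) \<Rightarrow> real" where
  "mnorm A = Max (range (\<lambda>s. \<Sum>s'\<in>UNIV. \<bar>A s s'\<bar>))"

text \<open>Policy = set of states where action 1 is played.\<close>
definition polP :: "('s \<Rightarrow> 's \<Rightarrow> real) \<Rightarrow> ('s \<Rightarrow> 's \<Rightarrow> real) \<Rightarrow> 's set \<Rightarrow> 's \<Rightarrow> 's \<Rightarrow> real" where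
  "polP P0 P1 \<pi> s = (if s \<in> \<pi> then P1 s else P0 s)"

definition polr :: "('s \<Rightarrow> real) \<Rightarrow> ('s \<Rightarrow> real) \<Rightarrow> real \<Rightarrow> 's set \<Rightarrow> 's \<Rightarrow> real" where
  "polr r0 r1 lam \<pi> s = (if s \<in> \<pi> then r1 s - lam else r0 s)"

definition exp_rew :: "('s::finite \<Rightarrow> 's \<Rightarrow> real) \<Rightarrow> ('s \<Rightarrow> real) \<Rightarrow> nat \<Rightarrow> 's \<Rightarrow> real" where
  "exp_rew P r t s = (\<Sum>u\<in>UNIV. nstep P t s u * r u)"

definition gain :: "('s::finite \<Rightarrow> 's \<Rightarrow> real) \<Rightarrow> ('s \<Rightarrow> real) \<Rightarrow> 's \<Rightarrow> real" where
  "gain P r s = lim (\<lambda>T. (\<Sum>t<T. exp_rew P r t s) / real T)"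

definition bias :: "('s::finite \<Rightarrow> 's \<Rightarrow> real) \<Rightarrow> ('s \<Rightarrow> real) \<Rightarrow> 's \<Rightarrow> real" where
  "bias P r s = lim (\<lambda>N. (\<Sum>n\<in>{1..N}. \<Sum>t<n. (exp_rew P r t s - gain P r s)) / real N)"

definition gain_opt :: "('s::finite \<Rightarrow> 's \<Rightarrow> real) \<Rightarrow> ('s \<Rightarrow> 's \<Rightarrow> real) \<Rightarrow>
    ('s \<Rightarrow> real) \<Rightarrow> ('s \<Rightarrow> real) \<Rightarrow> real \<Rightarrow> 's set \<Rightarrow> bool" where
  "gain_opt P0 P1 r0 r1 lam \<pi> \<longleftrightarrow>
     (\<forall>\<pi>' s. gain (polP P0 P1 \<pi>') (polr r0 r1 lam \<pi>') s \<le> gain (polP P0 P1 \<pi>) (polr r0 r1 lam \<pi>) s)"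

definition bias_opt :: "('s::finite \<Rightarrow> 's \<Rightarrow> real) \<Rightarrow> ('s \<Rightarrow> 's \<Rightarrow> real) \<Rightarrow>
    ('s \<Rightarrow> real) \<Rightarrow> ('s \<Rightarrow> real) \<Rightarrow> real \<Rightarrow> 's set \<Rightarrow> bool" where
  "bias_opt P0 P1 r0 r1 lam \<pi> \<longleftrightarrow> gain_opt P0 P1 r0 r1 lam \<pi> \<and>
     (\<forall>\<pi>'. gain_opt P0 P1 r0 r1 lam \<pi>' \<longrightarrow>
        (\<forall>s. bias (polP P0 P1 \<pi>') (polr r0 r1 lam \<pi>') s \<le> bias (polP P0 P1 \<pi>) (polr r0 r1 lam \<pi>) s))"

end

theory Submission
  imports Defs
begin

text \<open>
  Let \<open>g\<close> and \<open>b\<close> be the gain and the bias of the policy that always activates. The reward of any policy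
  \<open>\<pi>\<close> is \<open>g + b - P\<^sup>\<pi> b\<close> minus a gap which is \<open>0\<close> on \<open>\<pi>\<close> and the activation advantage \<open>\<alpha>\<close> off \<open>\<pi>\<close>.
  Comparing \<open>b\<close> with the hitting times of a recurrent state gives \<open>sp(b) \<le> sp(r\<^sup>1) D(P\<^sup>1)\<close>, and every
  zero-sum row \<open>\<delta> = P\<^sup>1\<^sub>s - P\<^sup>0\<^sub>s\<close> satisfies \<open>\<delta> b \<ge> - (\<Sum>|\<delta>|) sp(b) / 2\<close>; together with the bound on \<open>\<lambda>\<close>
  this gives \<open>\<alpha> \<ge> 0\<close>, hence no policy has gain above \<open>g\<close>. If \<open>\<pi>\<close> also has gain \<open>g\<close>, then \<open>b\<close> minus the bias
  of \<open>\<pi>\<close> is superharmonic for \<open>P\<^sup>\<pi>\<close>, so the bias of \<open>\<pi>\<close> is at most \<open>b - \<nu> b\<close> for invariant distributions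
  \<open>\<nu>\<close> of \<open>P\<^sup>\<pi>\<close> carried by the zero set of the gap. It remains to show \<open>\<nu> b \<ge> 0\<close>: if \<open>\<nu>\<close> charges no state
  where \<open>\<pi>\<close> changes the dynamics, \<open>\<nu>\<close> is invariant for \<open>P\<^sup>1\<close> and \<open>\<nu> b = 0\<close>; otherwise all the inequalities
  above are tight, and a case distinction on the position of \<open>g\<close> in the range of \<open>r\<^sup>1 - \<lambda>\<close> concludes.
  Part (2) is part (1) with the actions exchanged, which turns \<open>M(\<lambda>)\<close> into \<open>M(-\<lambda>)\<close> up to a constant
  shift of all rewards.

  Gain and bias are computed from the Cesaro limit of the powers of the transition matrix, which exists by
  compactness because these powers are bounded.
\<close>

section \<open>Cesaro means of power-bounded matrices\<close>

fun matpow :: "'a::semiring_1^'n^'n \<Rightarrow> nat \<Rightarrow> 'a^'n^'n" where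
  "matpow M 0 = mat 1"
| "matpow M (Suc n) = matpow M n ** M"

definition cesaro_mean :: "real^'n^'n \<Rightarrow> nat \<Rightarrow> real^'n^'n" where
  "cesaro_mean M T = (1 / real T) *\<^sub>R (\<Sum>t<T. matpow M t)"

lemma matpow_add: "matpow M (m + n) = matpow M m ** matpow M n"
  by (induction n) (auto simp: matrix_mul_assoc)

lemma matpow_commute: "M ** matpow M n = matpow M n ** M"
  by (induction n) (auto simp: matrix_mul_assoc)

lemma matrix_diff_ldistrib: "(A::'a::ring_1^'n^'m) ** (B - C) = A ** B - A ** C"
  by (simp add: matrix_matrix_mult_def vec_eq_iff sum_subtractf algebra_simps)

lemma matrix_diff_rdistrib: "((A::'a::ring_1^'n^'m) - B) ** C = A ** C - B ** C"
  by (simp add: matrix_matrix_mult_def vec_eq_iff sum_subtractf algebra_simps)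

lemma matrix_add_rdistrib: "((A::'a::semiring_1^'n^'m) + B) ** C = A ** C + B ** C"
  by (simp add: matrix_matrix_mult_def vec_eq_iff sum.distrib algebra_simps)

lemma matrix_sum_ldistrib: "(C::'a::semiring_1^'n^'m) ** (\<Sum>x\<in>S. f x) = (\<Sum>x\<in>S. C ** f x)"
  by (induction S rule: infinite_finite_induct) (auto simp: matrix_add_ldistrib)

lemma matrix_sum_rdistrib: "(\<Sum>x\<in>S. f x) ** (C::'a::semiring_1^'k^'n) = (\<Sum>x\<in>S. f x ** C)"
  by (induction S rule: infinite_finite_induct) (auto simp: matrix_add_rdistrib)

lemma matrix_vector_sum_rdistrib: "(\<Sum>x\<in>S. f x) *v (v::'a::semiring_1^'n) = (\<Sum>x\<in>S. f x *v v)"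
  by (induction S rule: infinite_finite_induct) (auto simp: matrix_vector_mult_add_rdistrib)

lemma tendsto_matrix_entry:
  "(f \<longlongrightarrow> (A::real^'n^'m)) F \<Longrightarrow> ((\<lambda>x. f x $ i $ j) \<longlongrightarrow> A $ i $ j) F"
  by (intro tendsto_vec_nth)

lemma tendsto_matrix_mult_right:
  "(f \<longlongrightarrow> (A::real^'n^'m)) F \<Longrightarrow> ((\<lambda>x. f x ** (C::real^'k^'n)) \<longlongrightarrow> A ** C) F"
  by (intro vec_tendstoI)
    (simp add: matrix_matrix_mult_def, intro tendsto_intros tendsto_matrix_entry)

lemma tendsto_matrix_mult_left:
  "(f \<longlongrightarrow> (A::real^'n^'m)) F \<Longrightarrow> ((\<lambda>x. (C::real^'m^'k) ** f x) \<longlongrightarrow> C ** A) F"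
  by (intro vec_tendstoI)
    (simp add: matrix_matrix_mult_def, intro tendsto_intros tendsto_matrix_entry)

lemma tendsto_matrix_vector_mult:
  "(f \<longlongrightarrow> (A::real^'n^'m)) F \<Longrightarrow> ((\<lambda>x. f x *v (v::real^'n)) \<longlongrightarrow> A *v v) F"
  by (intro vec_tendstoI)
    (simp add: matrix_vector_mult_def, intro tendsto_intros tendsto_matrix_entry)

lemma tendsto_unique_limit_point:
  fixes X :: "nat \<Rightarrow> 'a::heine_borel"
  assumes bounded: "bounded (range X)"
    and unique: "\<And>r L. strict_mono r \<Longrightarrow> (X \<circ> r) \<longlonglongrightarrow> L \<Longrightarrow> L = L0"
  shows "X \<longlonglongrightarrow> L0"
proof (rule tendstoI, rule ccontr)
  fix e :: real assume "e > 0" "\<not> eventually (\<lambda>n. dist (X n) L0 < e) sequentially"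
  then obtain r :: "nat \<Rightarrow> nat" where r: "strict_mono r" and far: "\<And>n. e \<le> dist (X (r n)) L0"
    using not_eventually_sequentiallyD by (metis not_less)
  have "bounded (range (X \<circ> r))"
    using bounded by (rule bounded_subset) auto
  then obtain L r' where r': "strict_mono r'" and lim: "(X \<circ> r \<circ> r') \<longlonglongrightarrow> L"
    using bounded_imp_convergent_subsequence by blast
  have "L = L0"
    using unique[OF strict_mono_o[OF r r']] lim by (simp add: o_assoc)
  then have "eventually (\<lambda>n. dist (X (r (r' n))) L0 < e) sequentially"
    using lim \<open>e > 0\<close> by (auto simp: o_def intro: tendstoD)
  then obtain n where "dist (X (r (r' n))) L0 < e"
    by (auto simp: eventually_sequentially)
  then show False
    using far[of "r' n"] by simp
qed

lemma sum_matpow_telescope: "(\<Sum>t<T. matpow M t) ** (mat 1 - M) = mat 1 - matpow (M::'a::ring_1^'n^'n) T"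
proof (induction T)
  case (Suc T)
  have "(\<Sum>t<Suc T. matpow M t) ** (mat 1 - M) = (\<Sum>t<T. matpow M t) ** (mat 1 - M) + matpow M T ** (mat 1 - M)"
    by (simp add: matrix_add_rdistrib)
  also have "\<dots> = mat 1 - matpow M T + (matpow M T - matpow M T ** M)"
    by (subst Suc.IH) (simp add: matrix_diff_ldistrib)
  finally show ?case
    by simp
qed simp

lemma sum_matpow_telescope': "(mat 1 - M) ** (\<Sum>t<T. matpow M t) = mat 1 - matpow (M::'a::ring_1^'n^'n) T"
proof -
  have "(mat 1 - M) ** (\<Sum>t<T. matpow M t) = (\<Sum>t<T. matpow M t) ** (mat 1 - M)"
    by (simp add: matrix_sum_ldistrib matrix_sum_rdistrib matrix_diff_ldistrib matrix_diff_rdistrib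
        matpow_commute sum_subtractf)
  then show ?thesis
    by (simp add: sum_matpow_telescope)
qed

lemma cesaro_mean_defect:
  "cesaro_mean M T ** (mat 1 - M) = (1 / real T) *\<^sub>R (mat 1 - matpow M T)"
  "(mat 1 - M) ** cesaro_mean M T = (1 / real T) *\<^sub>R (mat 1 - matpow M T)"
  by (simp_all only: cesaro_mean_def matrix_scalar_ac scalar_matrix_assoc[symmetric]
      sum_matpow_telescope sum_matpow_telescope')

lemma matpow_absorb:
  "L ** M = L \<Longrightarrow> L ** matpow M t = L"
  "M ** L = L \<Longrightarrow> matpow M t ** L = L"
   by (induction t) (simp_all add: matrix_mul_assoc, simp add: matpow_commute[symmetric] flip: matrix_mul_assoc)

lemma cesaro_mean_absorb:
  assumes "T > 0"
  shows "L ** M = L \<Longrightarrow> L ** cesaro_mean M T = L"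
    and "M ** L = L \<Longrightarrow> cesaro_mean M T ** L = L"
  using assms
  by (simp_all add: cesaro_mean_def matrix_scalar_ac scalar_matrix_assoc[symmetric]
      matrix_sum_ldistrib matrix_sum_rdistrib matpow_absorb sum_constant_scaleR del: sum_constant)

lemma cesaro_defect_tendsto_zero:
  fixes M :: "real^'n^'n"
  assumes "bounded (range (matpow M))"
  shows "(\<lambda>T. (1 / real T) *\<^sub>R (mat 1 - matpow M T)) \<longlonglongrightarrow> 0"
proof -
  obtain B where B: "\<And>T. norm (matpow M T) \<le> B"
    using assms by (auto simp: bounded_iff)
  have "norm ((1 / real T) *\<^sub>R (mat 1 - matpow M T)) \<le> (norm (mat 1 :: real^'n^'n) + B) / real T" for T
  proof -
    have "norm (mat 1 - matpow M T) \<le> norm (mat 1 :: real^'n^'n) + B"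
      using norm_triangle_ineq4[of "mat 1 :: real^'n^'n" "matpow M T"] B[of T] by linarith
    then show ?thesis
      by (simp add: divide_right_mono)
  qed
  then show ?thesis
    by (intro Lim_null_comparison[OF always_eventually lim_const_over_n]) auto
qed

lemma bounded_cesaro_mean:
  assumes "bounded (range (matpow M))"
  shows "bounded (range (cesaro_mean M))"
proof -
  obtain B where B: "\<And>T. norm (matpow M T) \<le> B"
    using assms by (auto simp: bounded_iff)
  have "norm (cesaro_mean M T) \<le> \<bar>B\<bar>" for T
  proof (cases "T = 0")
    case False
    have "norm (\<Sum>t<T. matpow M t) \<le> (\<Sum>t<T. norm (matpow M t))"
      by (rule norm_sum)
    also have "\<dots> \<le> (\<Sum>t<T. \<bar>B\<bar>)"
      using B by (intro sum_mono) (meson abs_ge_self order.trans)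
    finally have "norm (\<Sum>t<T. matpow M t) \<le> \<bar>B\<bar> * real T"
      by (simp add: mult.commute)
    then show ?thesis
      using False by (simp add: cesaro_mean_def pos_divide_le_eq)
  qed (simp add: cesaro_mean_def)
  then show ?thesis
    by (auto simp: bounded_iff)
qed

lemma cesaro_limit_point_absorbs:
  assumes "bounded (range (matpow M))" and "strict_mono r" and lim: "(cesaro_mean M \<circ> r) \<longlonglongrightarrow> L"
  shows "L ** M = L" and "M ** L = L"
proof -
  have defect: "(\<lambda>k. (1 / real (r k)) *\<^sub>R (mat 1 - matpow M (r k))) \<longlonglongrightarrow> 0"
    using LIMSEQ_subseq_LIMSEQ[OF cesaro_defect_tendsto_zero[OF assms(1)] assms(2)] by (simp add: o_def)
  have "(\<lambda>k. cesaro_mean M (r k) ** (mat 1 - M)) \<longlonglongrightarrow> L ** (mat 1 - M)"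
    using lim by (intro tendsto_matrix_mult_right) (simp add: o_def)
  then have "L ** (mat 1 - M) = 0"
    unfolding cesaro_mean_defect using defect by (rule LIMSEQ_unique)
  then show "L ** M = L"
    by (simp add: matrix_diff_ldistrib)
  have "(\<lambda>k. (mat 1 - M) ** cesaro_mean M (r k)) \<longlonglongrightarrow> (mat 1 - M) ** L"
    using lim by (intro tendsto_matrix_mult_left) (simp add: o_def)
  then have "(mat 1 - M) ** L = 0"
    unfolding cesaro_mean_defect using defect by (rule LIMSEQ_unique)
  then show "M ** L = L"
    by (simp add: matrix_diff_rdistrib)
qed

text \<open>Two limit points \<open>L\<close>, \<open>L'\<close> of the Cesaro means satisfy \<open>L' ** L = L\<close> (as \<open>M\<close> fixes the
  columns of \<open>L\<close>) and \<open>L' ** L = L'\<close> (as \<open>M\<close> fixes the rows of \<open>L'\<close>), so they coincide.\<close>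
theorem cesaro_mean_tendsto:
  assumes bounded: "bounded (range (matpow M))"
  obtains L where "cesaro_mean M \<longlonglongrightarrow> L" "L ** M = L" "M ** L = L"
proof -
  have pos: "\<forall>\<^sub>F k in sequentially. 0 < r k" if "strict_mono r" for r :: "nat \<Rightarrow> nat"
    using eventually_gt_at_top[of 0] by eventually_elim (metis seq_suble[OF that] order.strict_trans2)
  obtain L r where r: "strict_mono r" and lim: "(cesaro_mean M \<circ> r) \<longlonglongrightarrow> L"
    using bounded_imp_convergent_subsequence[OF bounded_cesaro_mean[OF bounded]] by blast
  note absorbs = cesaro_limit_point_absorbs[OF bounded r lim]
  have "cesaro_mean M \<longlonglongrightarrow> L"
  proof (rule tendsto_unique_limit_point[OF bounded_cesaro_mean[OF bounded]])
    fix r' L' assume r': "strict_mono r'" and lim': "(cesaro_mean M \<circ> r') \<longlonglongrightarrow> L'"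
    note absorbs' = cesaro_limit_point_absorbs[OF bounded r' lim']
    have "(\<lambda>k. cesaro_mean M (r' k) ** L) \<longlonglongrightarrow> L' ** L"
      using lim' by (intro tendsto_matrix_mult_right) (simp add: o_def)
    moreover have "\<forall>\<^sub>F k in sequentially. cesaro_mean M (r' k) ** L = L"
      using pos[OF r'] by eventually_elim (simp add: cesaro_mean_absorb absorbs)
    ultimately have "L' ** L = L"
      by (metis LIMSEQ_unique tendsto_eventually)
    have "(\<lambda>k. L' ** cesaro_mean M (r k)) \<longlonglongrightarrow> L' ** L"
      using lim by (intro tendsto_matrix_mult_left) (simp add: o_def)
    moreover have "\<forall>\<^sub>F k in sequentially. L' ** cesaro_mean M (r k) = L'"
      using pos[OF r] by eventually_elim (simp add: cesaro_mean_absorb absorbs')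
    ultimately have "L' ** L = L'"
      by (metis LIMSEQ_unique tendsto_eventually)
    with \<open>L' ** L = L\<close> show "L' = L"
      by simp
  qed
  then show ?thesis
    using absorbs that by blast
qed

lemma matpow_fixes: "M *v x = x \<Longrightarrow> matpow M t *v x = x"
  by (induction t) (simp_all flip: matrix_vector_mul_assoc)

lemma cesaro_mean_fixes:
  assumes "M *v x = x" and "T > 0"
  shows "cesaro_mean M T *v x = x"
  using assms
  by (simp add: cesaro_mean_def scaleR_matrix_vector_assoc[symmetric] matrix_vector_sum_rdistrib
      matpow_fixes sum_constant_scaleR del: sum_constant)

lemma cesaro_limit_idempotent:
  assumes lim: "cesaro_mean M \<longlonglongrightarrow> L" and "L ** M = L"
  shows "L ** L = L"
proof -
  have "\<forall>\<^sub>F T in sequentially. L ** cesaro_mean M T = L"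
    using eventually_gt_at_top[of 0] by eventually_elim (simp add: cesaro_mean_absorb \<open>L ** M = L\<close>)
  moreover have "(\<lambda>T. L ** cesaro_mean M T) \<longlonglongrightarrow> L ** L"
    using lim by (rule tendsto_matrix_mult_left)
  ultimately show ?thesis
    by (metis LIMSEQ_unique tendsto_eventually)
qed

lemma fundamental_matrix_injective:
  fixes M L :: "real^'n^'n"
  assumes lim: "cesaro_mean M \<longlonglongrightarrow> L" and "L ** M = L"
    and x: "(mat 1 - M + L) *v x = 0"
  shows "x = 0"
proof -
  have "L ** (mat 1 - M + L) = L"
    using cesaro_limit_idempotent[OF assms(1,2)] assms(2)
    by (simp add: matrix_add_ldistrib matrix_diff_ldistrib)
  then have Lx: "L *v x = 0"
    using x by (metis matrix_vector_mul_assoc matrix_vector_mult_0_right)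
  then have Mx: "M *v x = x"
    using x by (simp add: matrix_vector_mult_add_rdistrib matrix_vector_mult_diff_rdistrib)
  have "\<forall>\<^sub>F T in sequentially. cesaro_mean M T *v x = x"
    using eventually_gt_at_top[of 0] by eventually_elim (rule cesaro_mean_fixes[OF Mx])
  moreover have "(\<lambda>T. cesaro_mean M T *v x) \<longlonglongrightarrow> L *v x"
    using lim by (rule tendsto_matrix_vector_mult)
  ultimately have "L *v x = x"
    by (metis LIMSEQ_unique tendsto_eventually)
  with Lx show ?thesis
    by simp
qed

lemma poisson_equation_solvable:
  fixes M L :: "real^'n^'n"
  assumes lim: "cesaro_mean M \<longlonglongrightarrow> L" and "L ** M = L"
  obtains h where "L *v h = 0" and "h - M *v h = r - L *v r"
proof -
  define Y where "Y = mat 1 - M + L"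
  obtain B where "B ** Y = mat 1"
    using matrix_left_invertible_ker fundamental_matrix_injective[OF assms] unfolding Y_def by blast
  then have "Y ** B = mat 1"
    using matrix_left_right_inverse by blast
  define h where "h = B *v (r - L *v r)"
  have Yh: "Y *v h = r - L *v r"
    by (simp add: h_def matrix_vector_mul_assoc \<open>Y ** B = mat 1\<close>)
  have "L ** Y = L"
    using cesaro_limit_idempotent[OF assms] assms(2)
    by (simp add: Y_def matrix_add_ldistrib matrix_diff_ldistrib)
  then have "L *v h = L *v (Y *v h)"
    by (simp add: matrix_vector_mul_assoc)
  also have "\<dots> = 0"
    using cesaro_limit_idempotent[OF assms]
    by (simp add: Yh matrix_vector_mult_diff_distrib matrix_vector_mul_assoc)
  finally have "L *v h = 0" .
  moreover have "h - M *v h = r - L *v r"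
    using Yh \<open>L *v h = 0\<close>
    by (simp add: Y_def matrix_vector_mult_add_rdistrib matrix_vector_mult_diff_rdistrib)
  ultimately show ?thesis
    using that by blast
qed

lemma sum_matpow_poisson:
  fixes M L :: "'a::ring_1^'n^'n"
  assumes "M ** L = L" and "h - M *v h = r - L *v r"
  shows "(\<Sum>t<n. matpow M t *v r - L *v r) = h - matpow M n *v h"
proof -
  have "(\<Sum>t<n. matpow M t *v r - L *v r) = (\<Sum>t<n. matpow M t *v (r - L *v r))"
    by (simp add: matrix_vector_mult_diff_distrib matrix_vector_mul_assoc matpow_absorb(2)[OF assms(1)])
  also have "\<dots> = ((\<Sum>t<n. matpow M t) ** (mat 1 - M)) *v h"
    by (simp add: assms(2)[symmetric] matrix_vector_sum_rdistrib matrix_vector_mult_diff_rdistrib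
        flip: matrix_vector_mul_assoc)
  also have "\<dots> = h - matpow M n *v h"
    by (simp add: sum_matpow_telescope matrix_vector_mult_diff_rdistrib)
  finally show ?thesis .
qed

lemma cesaro_mean_sum_matpow:
  assumes "N > 0"
  shows "(\<Sum>n\<in>{1..N}. h - matpow M n *v h) /\<^sub>R real N = h - (M ** cesaro_mean M N) *v h"
proof -
  have "(\<Sum>n\<in>{1..N}. matpow M n) = (\<Sum>t<N. matpow M (Suc t))"
    by (rule sum.reindex_bij_witness[of _ Suc "\<lambda>n. n - 1"]) auto
  then have shift: "(\<Sum>n\<in>{1..N}. matpow M n) = M ** (\<Sum>t<N. matpow M t)"
    by (simp add: matrix_sum_ldistrib matpow_commute)
  have "(M ** cesaro_mean M N) *v h = (1 / real N) *\<^sub>R ((\<Sum>n\<in>{1..N}. matpow M n) *v h)"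
    by (simp add: shift[symmetric] cesaro_mean_def matrix_scalar_ac scalar_matrix_assoc[symmetric]
        scaleR_matrix_vector_assoc)
  then show ?thesis
    using assms by (simp add: sum_subtractf matrix_vector_sum_rdistrib sum_constant_scaleR scaleR_diff_right
        inverse_eq_divide del: sum_constant)
qed

section \<open>Gain and bias through the Cesaro limit\<close>

lemma nstep_nonneg: "stochastic P \<Longrightarrow> 0 \<le> nstep P n s t"
  by (induction n arbitrary: t) (auto simp: stochastic_def intro!: sum_nonneg)

lemma nstep_row_sum: "stochastic P \<Longrightarrow> (\<Sum>t\<in>UNIV. nstep P n s t) = 1"
proof (induction n)
  case (Suc n)
  have "(\<Sum>t\<in>UNIV. nstep P (Suc n) s t) = (\<Sum>u\<in>UNIV. nstep P n s u * (\<Sum>t\<in>UNIV. P u t))"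
    by (simp add: sum_distrib_left) (rule sum.swap)
  then show ?case
    using Suc by (simp add: stochastic_def)
qed simp

lemma nstep_le_one: "stochastic P \<Longrightarrow> nstep P n s t \<le> 1"
  using member_le_sum[of t UNIV "nstep P n s"] by (simp add: nstep_nonneg nstep_row_sum)

lemma nstep_eq_matpow: "nstep P n s t = matpow (\<chi> i j. P i j) n $ s $ t"
  by (induction n arbitrary: t) (auto simp: mat_def matrix_matrix_mult_def)

lemma nstep_add: "nstep P (m + n) s t = (\<Sum>u\<in>UNIV. nstep P m s u * nstep P n u t)"
  by (simp add: nstep_eq_matpow matpow_add matrix_matrix_mult_def)

lemma sum_delta_mult:
  fixes f :: "'s::finite \<Rightarrow> real"
  shows "(\<Sum>u\<in>UNIV. (if s = u then 1 else 0) * f u) = f s"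
    and "(\<Sum>u\<in>UNIV. f u * (if u = s then 1 else 0)) = f s"
proof -
  have "(if s = u then 1 else 0) * f u = (if u = s then f s else 0)"
    and "f u * (if u = s then 1 else 0) = (if u = s then f s else 0)" for u
    by simp_all
  then show "(\<Sum>u\<in>UNIV. (if s = u then 1 else 0) * f u) = f s"
    and "(\<Sum>u\<in>UNIV. f u * (if u = s then 1 else 0)) = f s"
    by simp_all
qed

lemma nstep_Suc_left: "nstep P (Suc n) s t = (\<Sum>u\<in>UNIV. P s u * nstep P n u t)"
  using nstep_add[of P "Suc 0" n] by (simp add: sum_delta_mult)

lemma exp_rew_eq_matpow: "exp_rew P r t s = (matpow (\<chi> i j. P i j) t *v (\<chi> i. r i)) $ s"
  by (simp add: exp_rew_def nstep_eq_matpow matrix_vector_mult_def)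

lemma exp_rew_0 [simp]: "exp_rew P r 0 s = r s"
  by (simp add: exp_rew_def sum_delta_mult)

lemma exp_rew_Suc: "exp_rew P r (Suc t) s = exp_rew P (\<lambda>w. \<Sum>u\<in>UNIV. P w u * r u) t s"
  unfolding exp_rew_def by (simp add: sum_distrib_left sum_distrib_right mult.assoc) (rule sum.swap)

lemma stochastic_matpow_bounded:
  fixes P :: "'s::finite \<Rightarrow> 's \<Rightarrow> real"
  assumes "stochastic P"
  shows "bounded (range (matpow (\<chi> i j. P i j)))"
proof -
  have "norm (matpow (\<chi> i j. P i j) n) \<le> real CARD('s) * real CARD('s)" for n
  proof -
    have "norm (matpow (\<chi> i j. P i j) n) \<le> (\<Sum>i\<in>UNIV. norm (matpow (\<chi> i j. P i j) n $ i))"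
      unfolding norm_vec_def by (rule L2_set_le_sum) simp
    also have "\<dots> \<le> (\<Sum>i\<in>UNIV. \<Sum>j\<in>UNIV. \<bar>nstep P n i j\<bar>)"
      unfolding nstep_eq_matpow by (intro sum_mono norm_le_l1_cart)
    also have "\<dots> \<le> (\<Sum>i\<in>(UNIV::'s set). \<Sum>j\<in>(UNIV::'s set). 1)"
      using assms by (intro sum_mono) (simp add: nstep_nonneg nstep_le_one)
    finally show ?thesis
      by simp
  qed
  then show ?thesis
    by (auto simp: bounded_iff)
qed

definition cesaro_limit :: "('s::finite \<Rightarrow> 's \<Rightarrow> real) \<Rightarrow> 's \<Rightarrow> 's \<Rightarrow> real" where
  "cesaro_limit P s t = lim (\<lambda>T. (\<Sum>n<T. nstep P n s t) / real T)"

lemma cesaro_mean_tendsto_cesaro_limit: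
  assumes "stochastic P"
  shows "cesaro_mean (\<chi> i j. P i j) \<longlonglongrightarrow> (\<chi> s t. cesaro_limit P s t)"
    and "(\<chi> s t. cesaro_limit P s t) ** (\<chi> i j. P i j) = (\<chi> s t. cesaro_limit P s t)"
    and "(\<chi> i j. P i j) ** (\<chi> s t. cesaro_limit P s t) = (\<chi> s t. cesaro_limit P s t)"
proof -
  obtain L where lim: "cesaro_mean (\<chi> i j. P i j) \<longlonglongrightarrow> L"
    and "L ** (\<chi> i j. P i j) = L" "(\<chi> i j. P i j) ** L = L"
    using cesaro_mean_tendsto[OF stochastic_matpow_bounded[OF assms]] by blast
  moreover have "L = (\<chi> s t. cesaro_limit P s t)"
  proof -
    have "(\<lambda>T. (\<Sum>n<T. nstep P n s t) / real T) \<longlonglongrightarrow> L $ s $ t" for s t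
      using tendsto_matrix_entry[OF lim, of s t]
      by (simp add: cesaro_mean_def sum_component nstep_eq_matpow)
    then have "cesaro_limit P s t = L $ s $ t" for s t
      unfolding cesaro_limit_def by (rule limI)
    then show ?thesis
      by (simp add: vec_eq_iff)
  qed
  ultimately show "cesaro_mean (\<chi> i j. P i j) \<longlonglongrightarrow> (\<chi> s t. cesaro_limit P s t)"
    "(\<chi> s t. cesaro_limit P s t) ** (\<chi> i j. P i j) = (\<chi> s t. cesaro_limit P s t)"
    "(\<chi> i j. P i j) ** (\<chi> s t. cesaro_limit P s t) = (\<chi> s t. cesaro_limit P s t)"
    by simp_all
qed

lemma cesaro_limit_absorbs:
  assumes "stochastic P"
  shows "(\<Sum>u\<in>UNIV. cesaro_limit P s u * P u t) = cesaro_limit P s t"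
    and "(\<Sum>u\<in>UNIV. P s u * cesaro_limit P u t) = cesaro_limit P s t"
  using cesaro_mean_tendsto_cesaro_limit(2,3)[OF assms]
  by (simp_all add: vec_eq_iff matrix_matrix_mult_def)

lemma tendsto_cesaro_exp_rew:
  assumes "stochastic P"
  shows "(\<lambda>T. (\<Sum>t<T. exp_rew P r t s) / real T) \<longlonglongrightarrow> (\<Sum>u\<in>UNIV. cesaro_limit P s u * r u)"
proof -
  have "(\<lambda>T. (cesaro_mean (\<chi> i j. P i j) T *v (\<chi> i. r i)) $ s)
      \<longlonglongrightarrow> ((\<chi> s t. cesaro_limit P s t) *v (\<chi> i. r i)) $ s"
    by (intro tendsto_vec_nth tendsto_matrix_vector_mult cesaro_mean_tendsto_cesaro_limit assms)
  moreover have "(cesaro_mean (\<chi> i j. P i j) T *v (\<chi> i. r i)) $ s = (\<Sum>t<T. exp_rew P r t s) / real T" for T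
    by (simp add: cesaro_mean_def scaleR_matrix_vector_assoc[symmetric] matrix_vector_sum_rdistrib
        exp_rew_eq_matpow divide_inverse mult.commute)
  ultimately show ?thesis
    by (simp add: matrix_vector_mult_def)
qed

lemma gain_eq_cesaro_limit:
  "stochastic P \<Longrightarrow> gain P r s = (\<Sum>u\<in>UNIV. cesaro_limit P s u * r u)"
  unfolding gain_def by (rule limI) (rule tendsto_cesaro_exp_rew)

lemma tendsto_cesaro_eventually_const:
  assumes "(\<lambda>T. (\<Sum>t<T. x t) / real T) \<longlonglongrightarrow> l" and "\<And>t. x t = c"
  shows "l = c"
proof -
  have "\<forall>\<^sub>F T in sequentially. (\<Sum>t<T. x t) / real T = c"
    using eventually_gt_at_top[of 0] by eventually_elim (simp add: assms(2))
  then show ?thesis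
    using assms(1) by (metis LIMSEQ_unique tendsto_eventually)
qed

lemma cesaro_limit_tendsto:
  "stochastic P \<Longrightarrow> (\<lambda>T. (\<Sum>n<T. nstep P n s t) / real T) \<longlonglongrightarrow> cesaro_limit P s t"
  using tendsto_matrix_entry[OF cesaro_mean_tendsto_cesaro_limit(1), of P s t]
  by (simp add: cesaro_mean_def sum_component nstep_eq_matpow)

lemma cesaro_limit_nonneg: "stochastic P \<Longrightarrow> 0 \<le> cesaro_limit P s t"
  by (rule tendsto_lowerbound[OF cesaro_limit_tendsto])
    (simp_all add: always_eventually nstep_nonneg sum_nonneg)

lemma cesaro_limit_row_sum: "stochastic P \<Longrightarrow> (\<Sum>t\<in>UNIV. cesaro_limit P s t) = 1"
  using tendsto_cesaro_eventually_const[OF tendsto_cesaro_exp_rew, of P "\<lambda>_. 1"]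
  by (simp add: exp_rew_def nstep_row_sum)

lemma cesaro_limit_superharmonic:
  assumes "stochastic P" and super: "\<And>s. (\<Sum>u\<in>UNIV. P s u * e u) \<le> e s"
  shows "(\<Sum>u\<in>UNIV. cesaro_limit P s u * e u) \<le> e s"
proof -
  have bound: "exp_rew P e t s \<le> e s" for t s
  proof (induction t arbitrary: s)
    case (Suc t)
    have "exp_rew P e (Suc t) s = exp_rew P (\<lambda>w. \<Sum>u\<in>UNIV. P w u * e u) t s"
      by (rule exp_rew_Suc)
    also have "\<dots> \<le> exp_rew P e t s"
      unfolding exp_rew_def by (intro sum_mono mult_left_mono super nstep_nonneg assms(1))
    finally show ?case
      using Suc.IH by (rule order.trans)
  qed simp
  have "\<forall>\<^sub>F T in sequentially. (\<Sum>t<T. exp_rew P e t s) / real T \<le> e s"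
    using eventually_gt_at_top[of 0]
  proof eventually_elim
    case (elim T)
    have "(\<Sum>t<T. exp_rew P e t s) \<le> (\<Sum>t<T. e s)"
      by (intro sum_mono bound)
    then show ?case
      using elim by (simp add: pos_divide_le_eq mult.commute)
  qed
  then show ?thesis
    by (rule tendsto_upperbound[OF tendsto_cesaro_exp_rew[OF assms(1)]]) simp
qed

definition invariant_distribution :: "('s::finite \<Rightarrow> 's \<Rightarrow> real) \<Rightarrow> ('s \<Rightarrow> real) \<Rightarrow> bool" where
  "invariant_distribution P \<mu> \<longleftrightarrow>
     (\<forall>u. 0 \<le> \<mu> u) \<and> (\<Sum>u\<in>UNIV. \<mu> u) = 1 \<and> (\<forall>v. (\<Sum>u\<in>UNIV. \<mu> u * P u v) = \<mu> v)"

lemma invariant_distribution_cesaro_limit: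
  "stochastic P \<Longrightarrow> invariant_distribution P (cesaro_limit P s)"
  by (simp add: invariant_distribution_def cesaro_limit_nonneg cesaro_limit_row_sum cesaro_limit_absorbs)

lemma invariant_cesaro_limit:
  assumes "stochastic P" and inv: "\<And>v. (\<Sum>u\<in>UNIV. \<mu> u * P u v) = \<mu> v"
  shows "(\<Sum>u\<in>UNIV. \<mu> u * cesaro_limit P u v) = \<mu> v"
proof -
  have const: "(\<Sum>u\<in>UNIV. \<mu> u * nstep P t u v) = \<mu> v" for t v
  proof (induction t arbitrary: v)
    case (Suc t)
    have "(\<Sum>u\<in>UNIV. \<mu> u * nstep P (Suc t) u v) = (\<Sum>w\<in>UNIV. (\<Sum>u\<in>UNIV. \<mu> u * nstep P t u w) * P w v)"
      by (simp add: sum_distrib_left sum_distrib_right mult.assoc) (rule sum.swap)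
    then show ?case
      using Suc.IH inv by simp
  qed (simp add: sum_delta_mult)
  have "(\<lambda>T. (\<Sum>t<T. \<Sum>u\<in>UNIV. \<mu> u * nstep P t u v) / real T) \<longlonglongrightarrow> (\<Sum>u\<in>UNIV. \<mu> u * cesaro_limit P u v)"
  proof -
    have "(\<lambda>T. \<Sum>u\<in>UNIV. \<mu> u * ((\<Sum>t<T. nstep P t u v) / real T)) \<longlonglongrightarrow> (\<Sum>u\<in>UNIV. \<mu> u * cesaro_limit P u v)"
      by (intro tendsto_sum tendsto_mult_left cesaro_limit_tendsto assms(1))
    then show ?thesis
      by (simp add: sum_divide_distrib sum_distrib_left) (subst sum.swap, simp)
  qed
  then show ?thesis
    using const by (rule tendsto_cesaro_eventually_const)
qed

lemma bias_eq_poisson_solution: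
  fixes P :: "'s::finite \<Rightarrow> 's \<Rightarrow> real"
  defines "M \<equiv> \<chi> i j. P i j" and "L \<equiv> \<chi> i j. cesaro_limit P i j"
  assumes stoch: "stochastic P" and Lh: "L *v h = 0" and poisson: "h - M *v h = (\<chi> i. r i) - L *v (\<chi> i. r i)"
  shows "bias P r s = h $ s"
proof -
  note lim = cesaro_mean_tendsto_cesaro_limit[OF stoch, folded M_def L_def]
  have "gain P r s = (L *v (\<chi> i. r i)) $ s" for s
    by (simp add: gain_eq_cesaro_limit[OF stoch] L_def matrix_vector_mult_def)
  then have partial: "(\<Sum>t<n. exp_rew P r t s - gain P r s) = h $ s - (matpow M n *v h) $ s" for n
    using arg_cong[OF sum_matpow_poisson[OF lim(3) poisson, of n], of "\<lambda>v. v $ s"]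
    by (simp add: exp_rew_eq_matpow M_def sum_component)
  have "(\<lambda>N. h - (M ** cesaro_mean M N) *v h) \<longlonglongrightarrow> h - (M ** L) *v h"
    by (intro tendsto_diff tendsto_const tendsto_matrix_vector_mult tendsto_matrix_mult_left lim(1))
  then have "(\<lambda>N. h - (M ** cesaro_mean M N) *v h) \<longlonglongrightarrow> h"
    by (simp add: lim(3) Lh)
  moreover have "\<forall>\<^sub>F N in sequentially.
      h - (M ** cesaro_mean M N) *v h = (\<Sum>n\<in>{1..N}. h - matpow M n *v h) /\<^sub>R real N"
    using eventually_gt_at_top[of 0] by eventually_elim (simp only: cesaro_mean_sum_matpow)
  ultimately have "(\<lambda>N. (\<Sum>n\<in>{1..N}. h - matpow M n *v h) /\<^sub>R real N) \<longlonglongrightarrow> h"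
    by (rule Lim_transform_eventually)
  from tendsto_vec_nth[OF this, of s]
  have "(\<lambda>N. (\<Sum>n\<in>{1..N}. h $ s - (matpow M n *v h) $ s) / real N) \<longlonglongrightarrow> h $ s"
    by (simp only: vector_scaleR_component sum_component vector_minus_component divide_inverse_commute
        real_scaleR_def)
  then show ?thesis
    unfolding bias_def partial by (rule limI)
qed

lemma bias_cesaro_limit_poisson:
  assumes "stochastic P"
  shows "(\<Sum>u\<in>UNIV. cesaro_limit P s u * bias P r u) = 0"
    and "bias P r s - (\<Sum>u\<in>UNIV. P s u * bias P r u) = r s - gain P r s"
proof -
  obtain h where "(\<chi> i j. cesaro_limit P i j) *v h = 0"
    and poisson: "h - (\<chi> i j. P i j) *v h = (\<chi> i. r i) - (\<chi> i j. cesaro_limit P i j) *v (\<chi> i. r i)"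
    using poisson_equation_solvable cesaro_mean_tendsto_cesaro_limit(1,2)[OF assms] by metis
  moreover note bias = bias_eq_poisson_solution[OF assms this]
  ultimately show "(\<Sum>u\<in>UNIV. cesaro_limit P s u * bias P r u) = 0"
    "bias P r s - (\<Sum>u\<in>UNIV. P s u * bias P r u) = r s - gain P r s"
    by (simp_all add: bias vec_eq_iff matrix_vector_mult_def gain_eq_cesaro_limit[OF assms])
qed

lemma gain_eq_of_gap:
  assumes "stochastic Q" and r: "\<And>u. r u = g + b u - (\<Sum>v\<in>UNIV. Q u v * b v) - d u"
  shows "gain Q r s = g - (\<Sum>u\<in>UNIV. cesaro_limit Q s u * d u)"
proof -
  have "(\<Sum>u\<in>UNIV. cesaro_limit Q s u * (\<Sum>v\<in>UNIV. Q u v * b v))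
      = (\<Sum>v\<in>UNIV. (\<Sum>u\<in>UNIV. cesaro_limit Q s u * Q u v) * b v)"
    by (simp add: sum_distrib_left sum_distrib_right mult.assoc) (rule sum.swap)
  then have "(\<Sum>u\<in>UNIV. cesaro_limit Q s u * (\<Sum>v\<in>UNIV. Q u v * b v)) = (\<Sum>v\<in>UNIV. cesaro_limit Q s v * b v)"
    by (simp add: cesaro_limit_absorbs(1)[OF assms(1)])
  then show ?thesis
    by (simp add: gain_eq_cesaro_limit[OF assms(1)] r algebra_simps sum.distrib sum_subtractf
        flip: sum_distrib_left sum_distrib_right add: cesaro_limit_row_sum[OF assms(1)])
qed

lemma bias_le_of_gap:
  assumes stoch: "stochastic Q" and r: "\<And>u. r u = g + b u - (\<Sum>v\<in>UNIV. Q u v * b v) - d u"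
    and "\<And>u. 0 \<le> d u" and gain: "\<And>s. gain Q r s = g"
  shows "bias Q r s \<le> b s - (\<Sum>u\<in>UNIV. cesaro_limit Q s u * b u)"
proof -
  define e where "e u = b u - bias Q r u" for u
  have "(\<Sum>v\<in>UNIV. Q u v * e v) = e u - d u" for u
    using bias_cesaro_limit_poisson(2)[OF stoch, of r u] r[of u] gain[of u]
    by (simp add: e_def right_diff_distrib sum_subtractf)
  then have "(\<Sum>u\<in>UNIV. cesaro_limit Q s u * e u) \<le> e s"
    using assms(3) by (intro cesaro_limit_superharmonic[OF stoch]) (simp add: diff_le_eq)
  moreover have "(\<Sum>u\<in>UNIV. cesaro_limit Q s u * e u) = (\<Sum>u\<in>UNIV. cesaro_limit Q s u * b u)"
    using bias_cesaro_limit_poisson(1)[OF stoch, of s r] by (simp add: e_def right_diff_distrib sum_subtractf)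
  ultimately show ?thesis
    by (simp add: e_def)
qed

lemma gain_add_const: "stochastic Q \<Longrightarrow> gain Q (\<lambda>s. r s + c) s = gain Q r s + c"
  by (simp add: gain_eq_cesaro_limit distrib_left sum.distrib cesaro_limit_row_sum flip: sum_distrib_right)

lemma bias_add_const:
  assumes "stochastic Q"
  shows "bias Q (\<lambda>s. r s + c) = bias Q r"
proof -
  have "exp_rew Q (\<lambda>s. r s + c) t s = exp_rew Q r t s + c" for t s
    using nstep_row_sum[OF assms, of t s]
    by (simp add: exp_rew_def distrib_left sum.distrib flip: sum_distrib_right)
  then show ?thesis
    by (simp add: fun_eq_iff bias_def gain_add_const[OF assms])
qed

section \<open>Reachability and unichain chains\<close>

lemma ex_Min_range: "\<exists>x. f x = Min (range (f :: 's::finite \<Rightarrow> 'a::linorder))"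
proof -
  have "Min (range f) \<in> range f"
    by (rule Min_in) simp_all
  then show ?thesis
    by (metis rangeE)
qed

lemma ex_Max_range: "\<exists>x. f x = Max (range (f :: 's::finite \<Rightarrow> 'a::linorder))"
proof -
  have "Max (range f) \<in> range f"
    by (rule Max_in) simp_all
  then show ?thesis
    by (metis rangeE)
qed

lemma reach_refl: "reach P s s"
  unfolding reach_def by (auto intro!: exI[of _ 0])

lemma reach_step: "0 < P s u \<Longrightarrow> reach P s u"
  unfolding reach_def by (auto intro!: exI[of _ "Suc 0"] simp: nstep_Suc_left sum_delta_mult)

lemma reach_trans:
  assumes "stochastic P" and "reach P s u" and "reach P u t"
  shows "reach P s t"
proof -
  obtain m n where m: "0 < nstep P m s u" and n: "0 < nstep P n u t"
    using assms by (auto simp: reach_def)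
  have "0 < nstep P m s u * nstep P n u t"
    using m n by simp
  also have "\<dots> \<le> (\<Sum>w\<in>UNIV. nstep P m s w * nstep P n w t)"
    using assms(1) by (intro member_le_sum) (auto simp: nstep_nonneg)
  also have "\<dots> = nstep P (m + n) s t"
    by (simp add: nstep_add)
  finally show ?thesis
    by (auto simp: reach_def)
qed

lemma recurrent_reach:
  "stochastic P \<Longrightarrow> recurrent P s \<Longrightarrow> reach P s t \<Longrightarrow> recurrent P t"
  unfolding recurrent_def by (meson reach_trans)

text \<open>A state minimising the number of states reachable from it is recurrent.\<close>
lemma reach_recurrent:
  assumes "stochastic P"
  obtains t where "reach P s t" and "recurrent P t"
proof -
  define R where "R x = {t. reach P x t}" for x
  obtain t where t: "reach P s t" and min: "\<And>u. reach P s u \<Longrightarrow> card (R t) \<le> card (R u)"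
    using ex_has_least_nat[of "reach P s" s "\<lambda>t. card (R t)"] reach_refl by blast
  have "recurrent P t"
    unfolding recurrent_def
  proof (intro allI impI)
    fix u assume tu: "reach P t u"
    have sub: "R u \<subseteq> R t"
      using reach_trans[OF assms tu] by (auto simp: R_def)
    moreover have "card (R t) \<le> card (R u)"
      using min reach_trans[OF assms t tu] by blast
    moreover have "card (R u) \<le> card (R t)"
      using sub by (intro card_mono) auto
    ultimately have "R u = R t"
      by (intro card_subset_eq) auto
    then show "reach P u t"
      using reach_refl[of P t] by (auto simp: R_def)
  qed
  with t that show ?thesis
    by blast
qed

lemma unichain_reach_recurrent:
  assumes "stochastic P" and "unichain P" and "recurrent P t"
  shows "reach P s t"
proof -
  obtain u where "reach P s u" and "recurrent P u"
    using reach_recurrent[OF assms(1)] by blast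
  then show ?thesis
    using assms reach_trans[OF assms(1)] by (auto simp: unichain_def)
qed

lemma nstep_Suc_pos:
  assumes stoch: "stochastic P" and "0 < nstep P (Suc n) s t"
  obtains u where "0 < nstep P n s u" and "0 < P u t"
proof -
  have nonneg: "0 \<le> nstep P n s u * P u t" for u
    using stoch by (simp add: nstep_nonneg stochastic_def)
  obtain u where "0 < nstep P n s u * P u t"
  proof (rule ccontr)
    assume "\<not> thesis"
    with that have "(\<Sum>u\<in>UNIV. nstep P n s u * P u t) \<le> 0"
      by (intro sum_nonpos) (meson not_less)
    with assms(2) show False
      by simp
  qed
  then show ?thesis
    using that nonneg stoch by (auto simp: zero_less_mult_iff nstep_nonneg stochastic_def dest: leD)
qed

lemma superharmonic_min_step:
  assumes stoch: "stochastic P" and min: "\<And>u. m \<le> z u"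
    and super: "\<And>u. z u = m \<Longrightarrow> (\<Sum>v\<in>UNIV. P u v * z v) \<le> z u"
    and "z u = m" and "0 < P u t"
  shows "z t = m"
proof -
  have "(\<Sum>v\<in>UNIV. P u v * (z v - m)) = (\<Sum>v\<in>UNIV. P u v * z v) - m"
    using stoch by (simp add: right_diff_distrib sum_subtractf stochastic_def flip: sum_distrib_right)
  also have "\<dots> \<le> 0"
    using super \<open>z u = m\<close> by simp
  finally have "P u t * (z t - m) \<le> 0"
    using member_le_sum[of t UNIV "\<lambda>v. P u v * (z v - m)"] stoch min
    by (simp add: stochastic_def)
  then show ?thesis
    using \<open>0 < P u t\<close> min[of t] by (simp add: mult_le_0_iff)
qed

lemma superharmonic_min_reach:
  assumes stoch: "stochastic P" and min: "\<And>u. m \<le> z u"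
    and super: "\<And>u. z u = m \<Longrightarrow> (\<Sum>v\<in>UNIV. P u v * z v) \<le> z u"
    and "z s = m" and "reach P s t"
  shows "z t = m"
proof -
  have "z t = m" if "0 < nstep P n s t" for n t
    using that
  proof (induction n arbitrary: t)
    case (Suc n)
    then obtain u where "0 < nstep P n s u" and "0 < P u t"
      using nstep_Suc_pos[OF stoch] by blast
    then show ?case
      using superharmonic_min_step[OF stoch min super] Suc.IH by blast
  qed (use \<open>z s = m\<close> in \<open>simp split: if_splits\<close>)
  then show ?thesis
    using \<open>reach P s t\<close> by (auto simp: reach_def)
qed

lemma minimum_principle:
  assumes stoch: "stochastic P" and reach: "\<And>s. reach P s t" and "0 \<le> z t"
    and super: "\<And>s. s \<noteq> t \<Longrightarrow> (\<Sum>u\<in>UNIV. P s u * z u) \<le> z s"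
  shows "0 \<le> z s"
proof (rule ccontr)
  assume "\<not> 0 \<le> z s"
  define m where "m = Min (range z)"
  have min: "m \<le> z u" for u
    by (simp add: m_def)
  obtain x where x: "z x = m"
    using ex_Min_range unfolding m_def by blast
  have "m < 0"
    using min[of s] \<open>\<not> 0 \<le> z s\<close> by simp
  have super_min: "(\<Sum>v\<in>UNIV. P u v * z v) \<le> z u" if "z u = m" for u
  proof -
    have "u \<noteq> t"
      using that \<open>0 \<le> z t\<close> \<open>m < 0\<close> by auto
    then show ?thesis
      by (rule super)
  qed
  have "z t = m"
    by (rule superharmonic_min_reach[OF stoch min super_min x reach])
  with \<open>0 \<le> z t\<close> \<open>m < 0\<close> show False
    by simp
qed

lemma unichain_harmonic_const:
  assumes stoch: "stochastic P" and uni: "unichain P" and harmonic: "\<And>s. (\<Sum>u\<in>UNIV. P s u * v u) = v s"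
  shows "v s = v t"
proof -
  obtain t' where "recurrent P t'"
    using uni by (auto simp: unichain_def)
  then have reach: "reach P x t'" for x
    using unichain_reach_recurrent[OF stoch uni] by blast
  have at_min: "w t' = Min (range w)" if "\<And>s. (\<Sum>u\<in>UNIV. P s u * w u) = w s" for w :: "_ \<Rightarrow> real"
  proof -
    obtain x where x: "w x = Min (range w)"
      using ex_Min_range by blast
    have min: "Min (range w) \<le> w u" and super: "(\<Sum>v\<in>UNIV. P u v * w v) \<le> w u" for u
      by (simp_all add: that)
    show ?thesis
      by (rule superharmonic_min_reach[OF stoch min super x reach])
  qed
  have const: "v x = v t'" for x
  proof -
    have "v t' \<le> v x"
      using at_min[of v] harmonic by simp
    moreover have "- v t' \<le> - v x"
      using at_min[of "\<lambda>s. - v s"] harmonic by (simp add: sum_negf)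
    ultimately show ?thesis
      by simp
  qed
  show ?thesis
    using const[of s] const[of t] by simp
qed

lemma unichain_cesaro_limit_unique:
  assumes stoch: "stochastic P" and uni: "unichain P" and inv: "invariant_distribution P \<mu>"
  shows "cesaro_limit P s = \<mu>"
proof
  fix v
  define c where "c = cesaro_limit P s v"
  have rows: "cesaro_limit P u v = c" for u
    unfolding c_def
    by (rule unichain_harmonic_const[OF stoch uni]) (rule cesaro_limit_absorbs(2)[OF stoch])
  have "\<mu> v = (\<Sum>u\<in>UNIV. \<mu> u * cesaro_limit P u v)"
    using inv by (simp add: invariant_cesaro_limit[OF stoch] invariant_distribution_def)
  also have "\<dots> = c"
    using inv by (simp add: rows invariant_distribution_def flip: sum_distrib_right)
  finally show "cesaro_limit P s v = \<mu> v"
    by (simp add: c_def)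
qed

section \<open>Hitting times\<close>

lemma avoid_target [simp]: "avoid P t n t = 0"
  by (cases n) auto

lemma avoid_bounds:
  assumes stoch: "stochastic P"
  shows "0 \<le> avoid P t n s" and "avoid P t n s \<le> 1"
proof -
  have "0 \<le> avoid P t n s \<and> avoid P t n s \<le> 1"
  proof (induction n arbitrary: s)
    case (Suc n)
    have "(\<Sum>u\<in>UNIV. P s u * avoid P t n u) \<le> (\<Sum>u\<in>UNIV. P s u)"
      using Suc.IH stoch by (intro sum_mono) (auto simp: stochastic_def intro: mult_left_le)
    moreover have "0 \<le> (\<Sum>u\<in>UNIV. P s u * avoid P t n u)"
      using Suc.IH stoch by (intro sum_nonneg) (simp add: stochastic_def)
    ultimately show ?case
      using stoch by (simp add: stochastic_def)
  qed simp
  then show "0 \<le> avoid P t n s" and "avoid P t n s \<le> 1"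
    by simp_all
qed

lemma avoid_Suc_le:
  assumes stoch: "stochastic P"
  shows "avoid P t (Suc n) s \<le> avoid P t n s"
proof (induction n arbitrary: s)
  case 0
  have "(\<Sum>u\<in>UNIV. P s u * avoid P t 0 u) \<le> (\<Sum>u\<in>UNIV. P s u)"
    using stoch by (intro sum_mono) (simp add: stochastic_def)
  then show ?case
    using stoch by (simp add: stochastic_def)
next
  case (Suc n)
  have "(\<Sum>u\<in>UNIV. P s u * avoid P t (Suc n) u) \<le> (\<Sum>u\<in>UNIV. P s u * avoid P t n u)"
    using stoch by (intro sum_mono mult_left_mono Suc.IH) (simp add: stochastic_def)
  then show ?case
    by simp
qed

lemma avoid_antimono:
  assumes "stochastic P" and "m \<le> n"
  shows "avoid P t n s \<le> avoid P t m s"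
  using lift_Suc_antimono_le[of "\<lambda>n. avoid P t n s", OF avoid_Suc_le[OF assms(1)] assms(2)] .

text \<open>Being at \<open>t\<close> at time \<open>n\<close> and avoiding \<open>t\<close> up to time \<open>n\<close> are disjoint events.\<close>
lemma avoid_add_nstep_le_one:
  assumes stoch: "stochastic P"
  shows "avoid P t n s + nstep P n s t \<le> 1"
proof (induction n arbitrary: s)
  case (Suc n)
  show ?case
  proof (cases "s = t")
    case True
    then show ?thesis
      using member_le_sum[of t UNIV "nstep P (Suc n) s"] nstep_row_sum[OF stoch, of "Suc n" s] stoch
      by (simp add: nstep_nonneg del: nstep.simps)
  next
    case False
    then have "avoid P t (Suc n) s + nstep P (Suc n) s t = (\<Sum>u\<in>UNIV. P s u * (avoid P t n u + nstep P n u t))"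
      by (simp add: nstep_Suc_left sum.distrib algebra_simps del: nstep.simps)
    also have "\<dots> \<le> (\<Sum>u\<in>UNIV. P s u)"
      using Suc.IH stoch by (intro sum_mono) (auto simp: stochastic_def intro: mult_left_le)
    finally show ?thesis
      using stoch by (simp add: stochastic_def)
  qed
qed simp

lemma avoid_add_le:
  assumes stoch: "stochastic P"
  shows "avoid P t (m + n) s \<le> avoid P t m s * Max (range (avoid P t n))"
proof (induction m arbitrary: s)
  case (Suc m)
  show ?case
  proof (cases "s = t")
    case False
    have "avoid P t (Suc m + n) s = (\<Sum>u\<in>UNIV. P s u * avoid P t (m + n) u)"
      using False by simp
    also have "\<dots> \<le> (\<Sum>u\<in>UNIV. P s u * (avoid P t m u * Max (range (avoid P t n))))"
      using stoch by (intro sum_mono mult_left_mono Suc.IH) (simp add: stochastic_def)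
    also have "\<dots> = avoid P t (Suc m) s * Max (range (avoid P t n))"
      using False by (simp add: sum_distrib_right mult.assoc)
    finally show ?thesis .
  qed simp
qed auto

lemma avoid_geometric:
  assumes stoch: "stochastic P" and reach: "\<And>s. reach P s t"
  obtains N \<rho> where "0 < N" and "0 \<le> \<rho>" and "\<rho> < 1" and "\<And>k s. avoid P t (k * N) s \<le> \<rho> ^ k"
proof -
  obtain n where n: "\<And>s. 0 < nstep P (n s) s t"
    using reach unfolding reach_def by metis
  define N where "N = Suc (Max (range n))"
  have less_one: "avoid P t N s < 1" for s
  proof -
    have "avoid P t N s \<le> avoid P t (n s) s"
      by (rule avoid_antimono[OF stoch]) (simp add: N_def le_SucI)
    also have "\<dots> < 1"
      using avoid_add_nstep_le_one[OF stoch, of t "n s" s] n[of s] by linarith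
    finally show ?thesis .
  qed
  define \<rho> where "\<rho> = Max (range (avoid P t N))"
  obtain s where "avoid P t N s = \<rho>"
    using ex_Max_range \<rho>_def by metis
  then have "0 \<le> \<rho>" and "\<rho> < 1"
    using avoid_bounds[OF stoch] less_one by metis+
  have le_\<rho>: "avoid P t N s \<le> \<rho>" for s
    by (simp add: \<rho>_def)
  have "avoid P t (k * N) s \<le> \<rho> ^ k" for k s
  proof (induction k arbitrary: s)
    case (Suc k)
    have "avoid P t (Suc k * N) s \<le> avoid P t N s * Max (range (avoid P t (k * N)))"
      using avoid_add_le[OF stoch, of t N "k * N" s] by simp
    also have "\<dots> \<le> \<rho> * \<rho> ^ k"
    proof (intro mult_mono)
      show "Max (range (avoid P t (k * N))) \<le> \<rho> ^ k"
        using Suc.IH by (auto intro: Max.boundedI)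
      show "0 \<le> Max (range (avoid P t (k * N)))"
        by (rule order.trans[OF avoid_bounds(1)[OF stoch, of t "k * N" s] Max_ge]) simp_all
    qed (simp_all add: le_\<rho> \<open>0 \<le> \<rho>\<close>)
    finally show ?case
      by simp
  qed (simp add: avoid_bounds[OF stoch])
  with \<open>0 \<le> \<rho>\<close> \<open>\<rho> < 1\<close> show ?thesis
    using that[of N \<rho>] by (simp add: N_def)
qed

lemma summable_avoid:
  assumes stoch: "stochastic P" and reach: "\<And>s. reach P s t"
  shows "summable (\<lambda>n. avoid P t n s)"
proof -
  obtain N \<rho> where N: "0 < N" and \<rho>: "0 \<le> \<rho>" "\<rho> < 1" and geo: "\<And>k s. avoid P t (k * N) s \<le> \<rho> ^ k"
    using avoid_geometric[OF stoch reach] by blast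
  define \<theta> where "\<theta> = root N (max \<rho> (1/2))"
  have \<theta>N: "\<theta> ^ N = max \<rho> (1/2)" and "0 < \<theta>" and "\<theta> < 1"
    using \<rho> N by (simp_all add: \<theta>_def real_root_pow_pos2)
  have "avoid P t n s \<le> \<theta> ^ n / \<theta> ^ N" if "N \<le> n" for n
  proof -
    have "avoid P t n s \<le> avoid P t (n div N * N) s"
      by (rule avoid_antimono[OF stoch]) simp
    also have "\<dots> \<le> max \<rho> (1/2) ^ (n div N)"
      using geo[of "n div N" s] \<rho> by (meson max.cobounded1 order.trans power_mono)
    also have "\<dots> = \<theta> ^ (N * (n div N))"
      by (simp add: power_mult \<theta>N)
    also have "\<dots> \<le> \<theta> ^ (n - N)"
    proof (rule power_decreasing)
      show "n - N \<le> N * (n div N)"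
        using mod_less_divisor[OF N, of n] mult_div_mod_eq[of N n] by linarith
    qed (use \<open>0 < \<theta>\<close> \<open>\<theta> < 1\<close> in auto)
    also have "\<dots> = \<theta> ^ n / \<theta> ^ N"
      using that \<open>0 < \<theta>\<close> by (simp add: power_diff)
    finally show ?thesis .
  qed
  then have "\<forall>\<^sub>F n in sequentially. norm (avoid P t n s) \<le> \<theta> ^ n / \<theta> ^ N"
    using avoid_bounds(1)[OF stoch] by (auto simp: eventually_sequentially)
  moreover have "summable (\<lambda>n. \<theta> ^ n / \<theta> ^ N)"
    using \<open>0 < \<theta>\<close> \<open>\<theta> < 1\<close> by (intro summable_divide summable_geometric) simp
  ultimately show ?thesis
    by (rule summable_comparison_test_ev)
qed

lemma hit_time_nonneg: "stochastic P \<Longrightarrow> (\<And>s. reach P s t) \<Longrightarrow> 0 \<le> hit_time P s t"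
  unfolding hit_time_def by (intro suminf_nonneg summable_avoid) (simp_all add: avoid_bounds)

lemma hit_time_target [simp]: "hit_time P t t = 0"
  by (simp add: hit_time_def)

lemma hit_time_first_step:
  assumes stoch: "stochastic P" and reach: "\<And>s. reach P s t" and "s \<noteq> t"
  shows "hit_time P s t = 1 + (\<Sum>u\<in>UNIV. P s u * hit_time P u t)"
proof -
  note summable = summable_avoid[OF stoch reach]
  have "(\<Sum>n. avoid P t (Suc n) s) = (\<Sum>n. \<Sum>u\<in>UNIV. P s u * avoid P t n u)"
    using \<open>s \<noteq> t\<close> by simp
  also have "\<dots> = (\<Sum>u\<in>UNIV. P s u * hit_time P u t)"
    by (simp add: hit_time_def suminf_sum summable_mult summable suminf_mult)
  finally show ?thesis
    using suminf_split_head[OF summable, of s] \<open>s \<noteq> t\<close> by (simp add: hit_time_def)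
qed

lemma hit_time_le_diameter: "recurrent P t \<Longrightarrow> hit_time P s t \<le> diameter P"
proof -
  assume "recurrent P t"
  have "{hit_time P s t | s t. recurrent P t} \<subseteq> range (\<lambda>(s, t). hit_time P s t)"
    by auto
  then have "finite {hit_time P s t | s t. recurrent P t}"
    by (rule finite_subset) simp
  then show ?thesis
    unfolding diameter_def using \<open>recurrent P t\<close> by (intro Max_ge) blast+
qed

lemma poisson_le_hit_time:
  assumes stoch: "stochastic P" and reach: "\<And>s. reach P s t"
    and drift: "\<And>s. s \<noteq> t \<Longrightarrow> b s - (\<Sum>u\<in>UNIV. P s u * b u) \<le> c"
  shows "b s - b t \<le> c * hit_time P s t"
proof -
  define z where "z s = c * hit_time P s t - (b s - b t)" for s
  have "0 \<le> z s"
  proof (rule minimum_principle[OF stoch reach])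
    show "0 \<le> z t"
      by (simp add: z_def)
    fix s assume "s \<noteq> t"
    have "(\<Sum>u\<in>UNIV. P s u * z u)
        = c * (\<Sum>u\<in>UNIV. P s u * hit_time P u t) - (\<Sum>u\<in>UNIV. P s u * b u) + (\<Sum>u\<in>UNIV. P s u) * b t"
      by (simp add: z_def algebra_simps sum.distrib sum_subtractf sum_distrib_left sum_distrib_right)
    also have "\<dots> = z s - c + (b s - (\<Sum>u\<in>UNIV. P s u * b u))"
      using hit_time_first_step[OF stoch reach \<open>s \<noteq> t\<close>] stoch
      by (simp add: z_def stochastic_def algebra_simps)
    also have "\<dots> \<le> z s"
      using drift[OF \<open>s \<noteq> t\<close>] by simp
    finally show "(\<Sum>u\<in>UNIV. P s u * z u) \<le> z s" .
  qed
  then show ?thesis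
    by (simp add: z_def)
qed

text \<open>Integrating \<open>h\<close> over \<open>N\<close> against \<open>\<mu>\<close>: since no mass enters \<open>N\<close> from outside, invariance gives
  \<open>\<Sum>\<^sub>N \<mu> h \<le> \<Sum>\<^sub>N \<mu> (h - 1)\<close>.\<close>
lemma invariant_vanishes_on_drift_set:
  fixes Q :: "'s::finite \<Rightarrow> 's \<Rightarrow> real"
  assumes Q_nonneg: "\<And>y v. 0 \<le> Q y v" and \<mu>_nonneg: "\<And>y. 0 \<le> \<mu> y"
    and invariant: "\<And>v. (\<Sum>y\<in>UNIV. \<mu> y * Q y v) = \<mu> v" and h_nonneg: "\<And>v. 0 \<le> h v"
    and drift: "\<And>y. y \<in> N \<Longrightarrow> 0 < \<mu> y \<Longrightarrow> (\<Sum>v\<in>UNIV. Q y v * h v) = h y - 1"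
    and closed: "\<And>y v. y \<notin> N \<Longrightarrow> 0 < \<mu> y \<Longrightarrow> v \<in> N \<Longrightarrow> Q y v = 0"
    and "y \<in> N"
  shows "\<mu> y = 0"
proof -
  have pos_or_zero: "0 < \<mu> y \<or> \<mu> y = 0" for y
    using \<mu>_nonneg[of y] by auto
  have "(\<Sum>v\<in>N. \<mu> v * h v) = (\<Sum>v\<in>N. \<Sum>y\<in>UNIV. \<mu> y * Q y v * h v)"
    by (simp add: invariant flip: sum_distrib_right)
  also have "\<dots> = (\<Sum>y\<in>UNIV. \<mu> y * (\<Sum>v\<in>N. Q y v * h v))"
    by (subst sum.swap) (simp add: sum_distrib_left mult.assoc)
  also have "\<dots> = (\<Sum>y\<in>N. \<mu> y * (\<Sum>v\<in>N. Q y v * h v)) + (\<Sum>y\<in>-N. \<mu> y * (\<Sum>v\<in>N. Q y v * h v))"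
    by (subst sum.union_disjoint[symmetric]) (auto simp: Compl_partition)
  also have "(\<Sum>y\<in>-N. \<mu> y * (\<Sum>v\<in>N. Q y v * h v)) = 0"
  proof (intro sum.neutral ballI)
    fix y assume "y \<in> - N"
    show "\<mu> y * (\<Sum>v\<in>N. Q y v * h v) = 0"
    proof (cases "0 < \<mu> y")
      case True
      then have "(\<Sum>v\<in>N. Q y v * h v) = 0"
        using closed \<open>y \<in> - N\<close> by (intro sum.neutral) simp
      then show ?thesis
        by simp
    qed (use pos_or_zero in auto)
  qed
  also have "(\<Sum>y\<in>N. \<mu> y * (\<Sum>v\<in>N. Q y v * h v)) \<le> (\<Sum>y\<in>N. \<mu> y * (h y - 1))"
  proof (rule sum_mono)
    fix y assume "y \<in> N"
    have "(\<Sum>v\<in>N. Q y v * h v) \<le> (\<Sum>v\<in>UNIV. Q y v * h v)"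
      using Q_nonneg h_nonneg by (intro sum_mono2) auto
    then show "\<mu> y * (\<Sum>v\<in>N. Q y v * h v) \<le> \<mu> y * (h y - 1)"
      using pos_or_zero[of y] drift[OF \<open>y \<in> N\<close>] by (auto intro: mult_left_mono)
  qed
  finally have "(\<Sum>y\<in>N. \<mu> y) \<le> 0"
    by (simp add: right_diff_distrib sum_subtractf)
  then show ?thesis
    using sum_nonneg_eq_0_iff[of N \<mu>] \<mu>_nonneg \<open>y \<in> N\<close> sum_nonneg[of N \<mu>] by auto
qed

lemma invariant_distribution_recurrent:
  assumes stoch: "stochastic P" and uni: "unichain P" and inv: "invariant_distribution P \<mu>"
    and "0 < \<mu> u"
  shows "recurrent P u"
proof (rule ccontr)
  obtain t where t: "recurrent P t"
    using uni by (auto simp: unichain_def)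
  note reach = unichain_reach_recurrent[OF stoch uni t]
  assume "\<not> recurrent P u"
  have "\<mu> u = 0"
  proof (rule invariant_vanishes_on_drift_set[where N = "{u. \<not> recurrent P u}" and h = "\<lambda>s. hit_time P s t",
        simplified])
    show "0 \<le> P y v" "0 \<le> \<mu> y" "(\<Sum>y\<in>UNIV. \<mu> y * P y v) = \<mu> v" "0 \<le> hit_time P v t" for y v
      using stoch inv hit_time_nonneg[OF stoch reach] by (simp_all add: stochastic_def invariant_distribution_def)
    show "(\<Sum>v\<in>UNIV. P y v * hit_time P v t) = hit_time P y t - 1" if "\<not> recurrent P y" for y
    proof -
      have "y \<noteq> t"
        using that t by auto
      then show ?thesis
        using hit_time_first_step[OF stoch reach] by simp
    qed
    show "P y v = 0" if "recurrent P y" "\<not> recurrent P v" for y v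
      using that stoch recurrent_reach[OF stoch _ reach_step] by (fastforce simp: stochastic_def order_less_le)
  qed (rule \<open>\<not> recurrent P u\<close>)
  with \<open>0 < \<mu> u\<close> show False
    by simp
qed

section \<open>The always-active policy\<close>

lemma span_nonneg: "0 \<le> span (f :: 's::finite \<Rightarrow> real)"
  using Min_le[of "range f" "f undefined"] Max_ge[of "range f" "f undefined"] by (simp add: span_def)

lemma sum_abs_diff_pos:
  fixes f g :: "'s::finite \<Rightarrow> real"
  assumes "f \<noteq> g"
  shows "0 < (\<Sum>u\<in>UNIV. \<bar>g u - f u\<bar>)"
proof -
  obtain u where "f u \<noteq> g u"
    using assms by auto
  then have "0 < \<bar>g u - f u\<bar>"
    by simp
  also have "\<dots> \<le> (\<Sum>u\<in>UNIV. \<bar>g u - f u\<bar>)"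
    by (rule member_le_sum) simp_all
  finally show ?thesis .
qed

lemma abs_le_vnorm: "\<bar>v s\<bar> \<le> vnorm (v :: 's::finite \<Rightarrow> real)"
  unfolding vnorm_def by (rule Max_ge) auto

lemma row_sum_le_mnorm: "(\<Sum>t\<in>UNIV. \<bar>A s t\<bar>) \<le> mnorm (A :: 's::finite \<Rightarrow> 's \<Rightarrow> real)"
  unfolding mnorm_def by (rule Max_ge) auto

text \<open>Since \<open>\<delta>\<close> sums to zero, \<open>b\<close> may be shifted by the midpoint of its range.\<close>
lemma zero_sum_inner_decomp:
  fixes \<delta> b :: "'s::finite \<Rightarrow> real"
  assumes "(\<Sum>u\<in>UNIV. \<delta> u) = 0"
  shows "(\<Sum>u\<in>UNIV. \<delta> u * b u) + (\<Sum>u\<in>UNIV. \<bar>\<delta> u\<bar>) / 2 * span b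
       = (\<Sum>u\<in>UNIV. if 0 < \<delta> u then \<delta> u * (b u - Min (range b)) else - \<delta> u * (Max (range b) - b u))"
proof -
  define c where "c = (Max (range b) + Min (range b)) / 2"
  have "(if 0 < \<delta> u then \<delta> u * (b u - Min (range b)) else - \<delta> u * (Max (range b) - b u))
      = \<delta> u * b u + \<bar>\<delta> u\<bar> * (span b / 2) - \<delta> u * c" for u
    by (auto simp: abs_if span_def c_def field_simps)
  then have "(\<Sum>u\<in>UNIV. if 0 < \<delta> u then \<delta> u * (b u - Min (range b)) else - \<delta> u * (Max (range b) - b u))
      = (\<Sum>u\<in>UNIV. \<delta> u * b u) + (\<Sum>u\<in>UNIV. \<bar>\<delta> u\<bar>) * (span b / 2) - (\<Sum>u\<in>UNIV. \<delta> u) * c"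
    by (simp add: sum.distrib sum_subtractf sum_distrib_right)
  then show ?thesis
    using assms by simp
qed

lemma zero_sum_inner_decomp_nonneg:
  "0 \<le> (if 0 < \<delta> u then \<delta> u * (b u - Min (range b)) else - \<delta> u * (Max (range (b :: 's::finite \<Rightarrow> real)) - b u))"
  using Min_le[of "range b" "b u"] Max_ge[of "range b" "b u"]
  by (auto simp: not_less intro: mult_nonpos_nonneg)

lemma zero_sum_inner_ge:
  fixes \<delta> b :: "'s::finite \<Rightarrow> real"
  assumes "(\<Sum>u\<in>UNIV. \<delta> u) = 0"
  shows "- (\<Sum>u\<in>UNIV. \<bar>\<delta> u\<bar>) / 2 * span b \<le> (\<Sum>u\<in>UNIV. \<delta> u * b u)"
proof -
  have "0 \<le> (\<Sum>u\<in>UNIV. if 0 < \<delta> u then \<delta> u * (b u - Min (range b)) else - \<delta> u * (Max (range b) - b u))"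
    by (intro sum_nonneg zero_sum_inner_decomp_nonneg)
  then show ?thesis
    using zero_sum_inner_decomp[OF assms, of b] by simp
qed

lemma zero_sum_inner_eq:
  fixes \<delta> b :: "'s::finite \<Rightarrow> real"
  assumes "(\<Sum>u\<in>UNIV. \<delta> u) = 0" and "(\<Sum>u\<in>UNIV. \<delta> u * b u) = - (\<Sum>u\<in>UNIV. \<bar>\<delta> u\<bar>) / 2 * span b"
  shows "0 < \<delta> u \<Longrightarrow> b u = Min (range b)" and "\<delta> u < 0 \<Longrightarrow> b u = Max (range b)"
proof -
  have "(\<Sum>u\<in>UNIV. if 0 < \<delta> u then \<delta> u * (b u - Min (range b)) else - \<delta> u * (Max (range b) - b u)) = 0"
    using zero_sum_inner_decomp[OF assms(1), of b] assms(2) by simp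
  then have "(if 0 < \<delta> u then \<delta> u * (b u - Min (range b)) else - \<delta> u * (Max (range b) - b u)) = 0"
    by (subst (asm) sum_nonneg_eq_0_iff) (simp_all add: zero_sum_inner_decomp_nonneg)
  then show "0 < \<delta> u \<Longrightarrow> b u = Min (range b)" and "\<delta> u < 0 \<Longrightarrow> b u = Max (range b)"
    by (auto split: if_splits)
qed

lemma stochastic_polP: "stochastic P0 \<Longrightarrow> stochastic P1 \<Longrightarrow> stochastic (polP P0 P1 \<pi>)"
  by (auto simp: stochastic_def polP_def)

lemma polP_UNIV [simp]: "polP P0 P1 UNIV = P1"
  and polP_empty [simp]: "polP P0 P1 {} = P0"
  and polr_UNIV [simp]: "polr r0 r1 lam UNIV = (\<lambda>s. r1 s - lam)"
  by (simp_all add: polP_def polr_def fun_eq_iff)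

locale all_active =
  fixes P0 P1 :: "'s::finite \<Rightarrow> 's \<Rightarrow> real" and r0 r1 :: "'s \<Rightarrow> real" and lam :: real and \<mu> :: "'s \<Rightarrow> real"
  assumes stoch0: "stochastic P0" and stoch1: "stochastic P1" and unichain1: "unichain P1"
    and invariant: "invariant_distribution P1 \<mu>"
    and lam_le: "lam \<le> - vnorm (\<lambda>s. r1 s - r0 s) - span r1 * diameter P1 * mnorm (\<lambda>s s'. P1 s s' - P0 s s') / 2"
begin

definition g :: real where
  "g = (\<Sum>u\<in>UNIV. \<mu> u * (r1 u - lam))"

definition b :: "'s \<Rightarrow> real" where
  "b = bias P1 (\<lambda>s. r1 s - lam)"

definition advantage :: "'s \<Rightarrow> real" where
  "advantage s = r1 s - lam - r0 s + (\<Sum>u\<in>UNIV. (P1 s u - P0 s u) * b u)"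

lemma cesaro_limit_P1: "cesaro_limit P1 s = \<mu>"
  by (rule unichain_cesaro_limit_unique[OF stoch1 unichain1 invariant])

lemma gain_all_active: "gain P1 (\<lambda>s. r1 s - lam) s = g"
  by (simp add: gain_eq_cesaro_limit[OF stoch1] cesaro_limit_P1 g_def)

lemma bias_poisson: "b s - (\<Sum>u\<in>UNIV. P1 s u * b u) = r1 s - lam - g"
  using bias_cesaro_limit_poisson(2)[OF stoch1] by (simp add: b_def gain_all_active)

lemma bias_step: "(\<Sum>u\<in>UNIV. P1 s u * b u) = b s - (r1 s - lam) + g"
  using bias_poisson[of s] by linarith

lemma bias_average: "(\<Sum>u\<in>UNIV. \<mu> u * b u) = 0"
  using bias_cesaro_limit_poisson(1)[OF stoch1] by (simp add: b_def cesaro_limit_P1)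

lemma gain_bounds: "Min (range r1) - lam \<le> g" "g \<le> Max (range r1) - lam"
proof -
  have "(\<Sum>u\<in>UNIV. \<mu> u * (Min (range r1) - lam)) \<le> g" and "g \<le> (\<Sum>u\<in>UNIV. \<mu> u * (Max (range r1) - lam))"
    using invariant unfolding g_def invariant_distribution_def
    by (auto intro!: sum_mono mult_left_mono)
  then show "Min (range r1) - lam \<le> g" "g \<le> Max (range r1) - lam"
    using invariant by (simp_all add: invariant_distribution_def flip: sum_distrib_right)
qed

lemma reach_recurrent1: "recurrent P1 t \<Longrightarrow> reach P1 s t"
  by (rule unichain_reach_recurrent[OF stoch1 unichain1])

lemma bias_hit_time_bounds:
  assumes "recurrent P1 t"
  shows "b s - b t \<le> (Max (range r1) - lam - g) * hit_time P1 s t"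
    and "b t - b s \<le> (g - (Min (range r1) - lam)) * hit_time P1 s t"
proof -
  show "b s - b t \<le> (Max (range r1) - lam - g) * hit_time P1 s t"
    using bias_poisson by (intro poisson_le_hit_time[OF stoch1 reach_recurrent1[OF assms]]) simp
  have "- b s - - b t \<le> (g - (Min (range r1) - lam)) * hit_time P1 s t"
    by (rule poisson_le_hit_time[OF stoch1 reach_recurrent1[OF assms]])
      (simp add: sum_negf bias_step)
  then show "b t - b s \<le> (g - (Min (range r1) - lam)) * hit_time P1 s t"
    by simp
qed

lemma bias_range_bounds:
  assumes "recurrent P1 t"
  shows "Max (range b) - b t \<le> (Max (range r1) - lam - g) * diameter P1"
    and "b t - Min (range b) \<le> (g - (Min (range r1) - lam)) * diameter P1"
proof -
  obtain s1 s2 where s1: "b s1 = Max (range b)" and s2: "b s2 = Min (range b)"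
    using ex_Max_range ex_Min_range by metis
  have "(Max (range r1) - lam - g) * hit_time P1 s1 t \<le> (Max (range r1) - lam - g) * diameter P1"
    and "(g - (Min (range r1) - lam)) * hit_time P1 s2 t \<le> (g - (Min (range r1) - lam)) * diameter P1"
    using gain_bounds by (simp_all add: mult_left_mono hit_time_le_diameter[OF assms])
  then show "Max (range b) - b t \<le> (Max (range r1) - lam - g) * diameter P1"
    and "b t - Min (range b) \<le> (g - (Min (range r1) - lam)) * diameter P1"
    using bias_hit_time_bounds[OF assms, of s1] bias_hit_time_bounds[OF assms, of s2] s1 s2 by linarith+
qed

lemma span_bias_le: "span b \<le> span r1 * diameter P1"
proof -
  obtain t where "recurrent P1 t"
    using unichain1 by (auto simp: unichain_def)
  then show ?thesis
    using bias_range_bounds[of t] by (simp add: span_def algebra_simps)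
qed


lemma diameter_nonneg: "0 \<le> diameter P1"
proof -
  obtain t where "recurrent P1 t"
    using unichain1 by (auto simp: unichain_def)
  then show ?thesis
    using hit_time_nonneg[OF stoch1 reach_recurrent1] hit_time_le_diameter by (meson order.trans)
qed

lemma row_diff_sum_zero: "(\<Sum>u\<in>UNIV. P1 y u - P0 y u) = 0"
  using stoch0 stoch1 by (simp add: sum_subtractf stochastic_def)

lemma advantage_decomp:
  "advantage y = (r1 y - r0 y + vnorm (\<lambda>s. r1 s - r0 s))
      + (- lam - vnorm (\<lambda>s. r1 s - r0 s) - span r1 * diameter P1 * mnorm (\<lambda>s s'. P1 s s' - P0 s s') / 2)
      + (mnorm (\<lambda>s s'. P1 s s' - P0 s s') - (\<Sum>u\<in>UNIV. \<bar>P1 y u - P0 y u\<bar>)) * (span r1 * diameter P1) / 2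
      + (\<Sum>u\<in>UNIV. \<bar>P1 y u - P0 y u\<bar>) * (span r1 * diameter P1 - span b) / 2
      + ((\<Sum>u\<in>UNIV. (P1 y u - P0 y u) * b u) + (\<Sum>u\<in>UNIV. \<bar>P1 y u - P0 y u\<bar>) / 2 * span b)"
  by (simp add: advantage_def field_simps)

lemma advantage_summands_nonneg:
  "0 \<le> r1 y - r0 y + vnorm (\<lambda>s. r1 s - r0 s)"
  "0 \<le> - lam - vnorm (\<lambda>s. r1 s - r0 s) - span r1 * diameter P1 * mnorm (\<lambda>s s'. P1 s s' - P0 s s') / 2"
  "0 \<le> (mnorm (\<lambda>s s'. P1 s s' - P0 s s') - (\<Sum>u\<in>UNIV. \<bar>P1 y u - P0 y u\<bar>)) * (span r1 * diameter P1) / 2"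
  "0 \<le> (\<Sum>u\<in>UNIV. \<bar>P1 y u - P0 y u\<bar>) * (span r1 * diameter P1 - span b) / 2"
  "0 \<le> (\<Sum>u\<in>UNIV. (P1 y u - P0 y u) * b u) + (\<Sum>u\<in>UNIV. \<bar>P1 y u - P0 y u\<bar>) / 2 * span b"
proof -
  show "0 \<le> r1 y - r0 y + vnorm (\<lambda>s. r1 s - r0 s)"
    using abs_le_vnorm[of "\<lambda>s. r1 s - r0 s" y] by linarith
  show "0 \<le> - lam - vnorm (\<lambda>s. r1 s - r0 s) - span r1 * diameter P1 * mnorm (\<lambda>s s'. P1 s s' - P0 s s') / 2"
    using lam_le by simp
  show "0 \<le> (mnorm (\<lambda>s s'. P1 s s' - P0 s s') - (\<Sum>u\<in>UNIV. \<bar>P1 y u - P0 y u\<bar>)) * (span r1 * diameter P1) / 2"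
    using row_sum_le_mnorm[of "\<lambda>s s'. P1 s s' - P0 s s'" y] span_nonneg[of r1] diameter_nonneg by simp
  show "0 \<le> (\<Sum>u\<in>UNIV. \<bar>P1 y u - P0 y u\<bar>) * (span r1 * diameter P1 - span b) / 2"
    using span_bias_le by (simp add: sum_nonneg)
  show "0 \<le> (\<Sum>u\<in>UNIV. (P1 y u - P0 y u) * b u) + (\<Sum>u\<in>UNIV. \<bar>P1 y u - P0 y u\<bar>) / 2 * span b"
    using zero_sum_inner_ge[OF row_diff_sum_zero[of y], where b = b] by simp
qed

lemma advantage_nonneg: "0 \<le> advantage y"
  using advantage_decomp[of y] advantage_summands_nonneg(1,3-5)[of y] advantage_summands_nonneg(2)
  by linarith

lemma advantage_zero:
  assumes "advantage y = 0"
  shows "(\<Sum>u\<in>UNIV. (P1 y u - P0 y u) * b u) = - (\<Sum>u\<in>UNIV. \<bar>P1 y u - P0 y u\<bar>) / 2 * span b"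
    and "P0 y \<noteq> P1 y \<Longrightarrow> span b = span r1 * diameter P1"
proof -
  note summands = advantage_decomp[of y] advantage_summands_nonneg(1,3-5)[of y] advantage_summands_nonneg(2)
  show "(\<Sum>u\<in>UNIV. (P1 y u - P0 y u) * b u) = - (\<Sum>u\<in>UNIV. \<bar>P1 y u - P0 y u\<bar>) / 2 * span b"
    using summands assms by linarith
  assume "P0 y \<noteq> P1 y"
  then have "0 < (\<Sum>u\<in>UNIV. \<bar>P1 y u - P0 y u\<bar>)"
    by (rule sum_abs_diff_pos)
  moreover have "(\<Sum>u\<in>UNIV. \<bar>P1 y u - P0 y u\<bar>) * (span r1 * diameter P1 - span b) = 0"
    using summands assms by linarith
  ultimately show "span b = span r1 * diameter P1"
    by simp
qed


lemma tight_bias_range: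
  assumes tight: "span b = span r1 * diameter P1" and "recurrent P1 t"
  shows "Max (range b) - b t = (Max (range r1) - lam - g) * diameter P1"
    and "b t - Min (range b) = (g - (Min (range r1) - lam)) * diameter P1"
    and "b s = Max (range b) \<Longrightarrow> (Max (range r1) - lam - g) * hit_time P1 s t = (Max (range r1) - lam - g) * diameter P1"
    and "b s = Min (range b) \<Longrightarrow> (g - (Min (range r1) - lam)) * hit_time P1 s t = (g - (Min (range r1) - lam)) * diameter P1"
proof -
  have sum: "Max (range b) - Min (range b) = (Max (range r1) - lam - g) * diameter P1 + (g - (Min (range r1) - lam)) * diameter P1"
    using tight by (simp add: span_def algebra_simps)
  note range = bias_range_bounds[OF \<open>recurrent P1 t\<close>]
  show max: "Max (range b) - b t = (Max (range r1) - lam - g) * diameter P1"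
    and min: "b t - Min (range b) = (g - (Min (range r1) - lam)) * diameter P1"
    using range sum by linarith+
  have "(Max (range r1) - lam - g) * hit_time P1 s t \<le> (Max (range r1) - lam - g) * diameter P1"
    and "(g - (Min (range r1) - lam)) * hit_time P1 s t \<le> (g - (Min (range r1) - lam)) * diameter P1"
    using gain_bounds by (simp_all add: mult_left_mono hit_time_le_diameter[OF \<open>recurrent P1 t\<close>])
  then show "b s = Max (range b) \<Longrightarrow> (Max (range r1) - lam - g) * hit_time P1 s t = (Max (range r1) - lam - g) * diameter P1"
    and "b s = Min (range b) \<Longrightarrow> (g - (Min (range r1) - lam)) * hit_time P1 s t = (g - (Min (range r1) - lam)) * diameter P1"
    using bias_hit_time_bounds[OF \<open>recurrent P1 t\<close>, of s] max min by linarith+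
qed

lemma bias_zero_if_span_zero:
  assumes "span b = 0"
  shows "b u = 0"
proof -
  define m where "m = Min (range b)"
  have const: "b v = m" for v
  proof -
    have "Min (range b) \<le> b v" and "b v \<le> Max (range b)"
      by simp_all
    then show ?thesis
      using assms unfolding span_def m_def by linarith
  qed
  have "(\<Sum>v\<in>UNIV. \<mu> v * b v) = m"
    using invariant by (simp add: const invariant_distribution_def flip: sum_distrib_right)
  then show ?thesis
    using const[of u] bias_average by simp
qed

lemma bias_nonneg_if_gain_min:
  assumes tight: "span b = span r1 * diameter P1" and "g = Min (range r1) - lam"
  shows "0 \<le> b u"
proof -
  have "\<mu> v * b v = \<mu> v * Min (range b)" for v
  proof (cases "0 < \<mu> v")
    case True
    then have "recurrent P1 v"
      by (rule invariant_distribution_recurrent[OF stoch1 unichain1 invariant])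
    then show ?thesis
      using tight_bias_range(2)[OF tight] \<open>g = Min (range r1) - lam\<close> by simp
  qed (use invariant in \<open>simp add: invariant_distribution_def order_less_le\<close>)
  then have "(\<Sum>v\<in>UNIV. \<mu> v * b v) = (\<Sum>v\<in>UNIV. \<mu> v) * Min (range b)"
    by (simp only: sum_distrib_right)
  then have "Min (range b) = 0"
    using bias_average invariant by (simp add: invariant_distribution_def)
  then show ?thesis
    using Min_le[of "range b" "b u"] by simp
qed


definition gap :: "'s set \<Rightarrow> 's \<Rightarrow> real" where
  "gap \<pi> s = (if s \<in> \<pi> then 0 else advantage s)"

lemma gap_nonneg: "0 \<le> gap \<pi> s"
  by (simp add: gap_def advantage_nonneg)

lemma policy_reward_eq: "polr r0 r1 lam \<pi> s = g + b s - (\<Sum>u\<in>UNIV. polP P0 P1 \<pi> s u * b u) - gap \<pi> s"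
  by (simp add: polr_def polP_def gap_def advantage_def bias_step left_diff_distrib sum_subtractf)

lemma invariant_policy_reward:
  assumes inv: "invariant_distribution (polP P0 P1 \<pi>) \<nu>" and gap0: "\<And>u. 0 < \<nu> u \<Longrightarrow> gap \<pi> u = 0"
  shows "(\<Sum>u\<in>UNIV. \<nu> u * polr r0 r1 lam \<pi> u) = g"
proof -
  have "(\<Sum>u\<in>UNIV. \<nu> u * (\<Sum>v\<in>UNIV. polP P0 P1 \<pi> u v * b v))
      = (\<Sum>v\<in>UNIV. (\<Sum>u\<in>UNIV. \<nu> u * polP P0 P1 \<pi> u v) * b v)"
    by (simp add: sum_distrib_left sum_distrib_right mult.assoc) (rule sum.swap)
  also have "\<dots> = (\<Sum>v\<in>UNIV. \<nu> v * b v)"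
    using inv by (simp add: invariant_distribution_def)
  finally have step: "(\<Sum>u\<in>UNIV. \<nu> u * (\<Sum>v\<in>UNIV. polP P0 P1 \<pi> u v * b v)) = (\<Sum>v\<in>UNIV. \<nu> v * b v)" .
  have "\<nu> u * gap \<pi> u = 0" for u
    using gap0[of u] inv by (cases "0 < \<nu> u") (auto simp: invariant_distribution_def order_less_le)
  then have "(\<Sum>u\<in>UNIV. \<nu> u * gap \<pi> u) = 0"
    by (intro sum.neutral) blast
  then have "(\<Sum>u\<in>UNIV. \<nu> u * polr r0 r1 lam \<pi> u)
      = (\<Sum>u\<in>UNIV. \<nu> u) * g + (\<Sum>u\<in>UNIV. \<nu> u * b u) - (\<Sum>u\<in>UNIV. \<nu> u * (\<Sum>v\<in>UNIV. polP P0 P1 \<pi> u v * b v))"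
    by (simp add: policy_reward_eq right_diff_distrib distrib_left sum.distrib sum_subtractf sum_distrib_right)
  then show ?thesis
    using inv step by (simp add: invariant_distribution_def)
qed

lemma invariant_policy_bias_zero:
  assumes inv: "invariant_distribution (polP P0 P1 \<pi>) \<nu>"
    and no_switch: "\<And>u. 0 < \<nu> u \<Longrightarrow> u \<notin> \<pi> \<Longrightarrow> P0 u = P1 u"
  shows "(\<Sum>u\<in>UNIV. \<nu> u * b u) = 0"
proof -
  have "\<nu> u * P1 u v = \<nu> u * polP P0 P1 \<pi> u v" for u v
    using no_switch[of u] inv by (cases "0 < \<nu> u") (auto simp: polP_def invariant_distribution_def order_less_le)
  then have "(\<Sum>u\<in>UNIV. \<nu> u * P1 u v) = (\<Sum>u\<in>UNIV. \<nu> u * polP P0 P1 \<pi> u v)" for v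
    by (intro sum.cong) simp_all
  then have "invariant_distribution P1 \<nu>"
    using inv by (simp add: invariant_distribution_def)
  then have "\<nu> = \<mu>"
    using unichain_cesaro_limit_unique[OF stoch1 unichain1] invariant by metis
  then show ?thesis
    by (simp add: bias_average)
qed

lemma policy_reward_le_max:
  assumes "u \<in> \<pi> \<or> advantage u = 0"
  shows "polr r0 r1 lam \<pi> u \<le> Max (range r1) - lam"
    and "u \<notin> \<pi> \<Longrightarrow> P0 u \<noteq> P1 u \<Longrightarrow> 0 < span b \<Longrightarrow> polr r0 r1 lam \<pi> u < Max (range r1) - lam"
proof -
  have "r1 u \<le> Max (range r1)"
    by simp
  show "polr r0 r1 lam \<pi> u \<le> Max (range r1) - lam"
  proof (cases "u \<in> \<pi>")
    case False
    then have "polr r0 r1 lam \<pi> u = r1 u - lam - (\<Sum>v\<in>UNIV. \<bar>P1 u v - P0 u v\<bar>) / 2 * span b"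
      using assms advantage_zero(1)[of u] by (simp add: polr_def advantage_def)
    moreover have "0 \<le> (\<Sum>v\<in>UNIV. \<bar>P1 u v - P0 u v\<bar>) / 2 * span b"
      by (simp add: sum_nonneg span_nonneg)
    ultimately show ?thesis
      using \<open>r1 u \<le> Max (range r1)\<close> by linarith
  qed (simp add: polr_def)
  assume "u \<notin> \<pi>" and "P0 u \<noteq> P1 u" and "0 < span b"
  then have "polr r0 r1 lam \<pi> u = r1 u - lam - (\<Sum>v\<in>UNIV. \<bar>P1 u v - P0 u v\<bar>) / 2 * span b"
    and "0 < (\<Sum>v\<in>UNIV. \<bar>P1 u v - P0 u v\<bar>) / 2 * span b"
    using assms advantage_zero(1)[of u] by (simp_all add: polr_def advantage_def sum_abs_diff_pos)
  then show "polr r0 r1 lam \<pi> u < Max (range r1) - lam"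
    using \<open>r1 u \<le> Max (range r1)\<close> by linarith
qed

lemma gain_max_no_switch:
  assumes inv: "invariant_distribution (polP P0 P1 \<pi>) \<nu>" and gap0: "\<And>u. 0 < \<nu> u \<Longrightarrow> gap \<pi> u = 0"
    and x: "0 < \<nu> x" "x \<notin> \<pi>" "P0 x \<noteq> P1 x"
    and "0 < span b" and g_max: "g = Max (range r1) - lam"
  shows False
proof -
  have charged: "u \<in> \<pi> \<or> advantage u = 0" if "0 < \<nu> u" for u
    using gap0[OF that] by (simp add: gap_def split: if_splits)
  have "0 < \<nu> x * (g - polr r0 r1 lam \<pi> x)"
    using x policy_reward_le_max(2)[OF charged] \<open>0 < span b\<close> g_max by simp
  also have "\<dots> \<le> (\<Sum>u\<in>UNIV. \<nu> u * (g - polr r0 r1 lam \<pi> u))"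
  proof (rule member_le_sum)
    show "0 \<le> \<nu> u * (g - polr r0 r1 lam \<pi> u)" for u
      using policy_reward_le_max(1)[OF charged, of u] inv g_max
      by (cases "0 < \<nu> u") (auto simp: invariant_distribution_def order_less_le)
  qed simp_all
  also have "\<dots> = 0"
    using inv invariant_policy_reward[OF inv gap0]
    by (simp add: right_diff_distrib sum_subtractf invariant_distribution_def flip: sum_distrib_right)
  finally show False
    by simp
qed

lemma advantage_zero_step_to_min:
  assumes "advantage y = 0" and "P0 y \<noteq> P1 y"
  obtains u where "P0 y u < P1 y u" and "b u = Min (range b)"
proof -
  have "\<exists>u. 0 < P1 y u - P0 y u"
  proof (rule ccontr)
    assume "\<not> (\<exists>u. 0 < P1 y u - P0 y u)"
    then have "\<forall>u\<in>UNIV. P0 y u - P1 y u = 0"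
      using row_diff_sum_zero[of y] sum_nonneg_eq_0_iff[of UNIV "\<lambda>u. P0 y u - P1 y u"]
      by (simp add: sum_subtractf not_less)
    with assms(2) show False
      by auto
  qed
  then obtain u where "0 < P1 y u - P0 y u"
    by blast
  moreover note zero_sum_inner_eq(1)[OF row_diff_sum_zero advantage_zero(1)[OF assms(1)]]
  ultimately show ?thesis
    using that by simp
qed

lemma advantage_zero_hit_time_eq:
  assumes tight: "span b = span r1 * diameter P1" and "recurrent P1 t"
    and "g < Max (range r1) - lam" and "Min (range r1) - lam < g"
    and "advantage y = 0"
  shows "(\<Sum>v\<in>UNIV. P0 y v * hit_time P1 v t) = (\<Sum>v\<in>UNIV. P1 y v * hit_time P1 v t)"
proof -
  have summand: "(P1 y v - P0 y v) * hit_time P1 v t = (P1 y v - P0 y v) * diameter P1" for v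
  proof (cases "P1 y v - P0 y v = 0")
    case False
    note signs = zero_sum_inner_eq[OF row_diff_sum_zero advantage_zero(1)[OF \<open>advantage y = 0\<close>]]
    have "b v = Max (range b) \<or> b v = Min (range b)"
      using False signs[of v] by linarith
    then have "hit_time P1 v t = diameter P1"
      using tight_bias_range(3,4)[OF tight \<open>recurrent P1 t\<close>, of v] assms(3,4) by auto
    then show ?thesis
      by simp
  qed simp
  have "(\<Sum>v\<in>UNIV. (P1 y v - P0 y v) * hit_time P1 v t) = (\<Sum>v\<in>UNIV. (P1 y v - P0 y v) * diameter P1)"
    by (rule sum.cong[OF refl summand])
  also have "\<dots> = 0"
    by (simp add: row_diff_sum_zero flip: sum_distrib_right)
  finally show ?thesis
    by (simp add: row_diff_sum_zero left_diff_distrib sum_subtractf)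
qed


text \<open>In the interior case the argmin of \<open>b\<close> is transient, but a switching state with zero advantage
  can step there.\<close>
lemma interior_switching_transient:
  assumes tight: "span b = span r1 * diameter P1" and "0 < span b" and "Min (range r1) - lam < g"
    and "advantage y = 0" and "P0 y \<noteq> P1 y"
  shows "\<not> recurrent P1 y"
proof
  assume "recurrent P1 y"
  obtain u where "P0 y u < P1 y u" and min: "b u = Min (range b)"
    using advantage_zero_step_to_min[OF assms(4,5)] .
  moreover have "0 \<le> P0 y u"
    using stoch0 by (simp add: stochastic_def)
  ultimately have "recurrent P1 u"
    using recurrent_reach[OF stoch1 \<open>recurrent P1 y\<close> reach_step] by simp
  moreover have "0 < diameter P1"
    using tight \<open>0 < span b\<close> diameter_nonneg by (metis less_eq_real_def mult_zero_right)
  ultimately show False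
    using tight_bias_range(2)[OF tight, of u] min \<open>Min (range r1) - lam < g\<close> by simp
qed

text \<open>The hitting time of a recurrent state is a drift function for the policy on the transient states,
  which therefore carry no invariant mass.\<close>
lemma gain_interior_no_switch:
  assumes inv: "invariant_distribution (polP P0 P1 \<pi>) \<nu>" and gap0: "\<And>u. 0 < \<nu> u \<Longrightarrow> gap \<pi> u = 0"
    and x: "0 < \<nu> x" "x \<notin> \<pi>" "P0 x \<noteq> P1 x"
    and tight: "span b = span r1 * diameter P1" and "0 < span b"
    and g_lower: "Min (range r1) - lam < g" and g_upper: "g < Max (range r1) - lam"
  shows False
proof -
  obtain t where t: "recurrent P1 t"
    using unichain1 by (auto simp: unichain_def)
  have zero_adv: "advantage y = 0" if "0 < \<nu> y" "y \<notin> \<pi>" for y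
    using gap0[OF that(1)] that(2) by (simp add: gap_def)
  note switching_transient = interior_switching_transient[OF tight \<open>0 < span b\<close> g_lower zero_adv]
  have "\<nu> x = 0"
  proof (rule invariant_vanishes_on_drift_set[where N = "{u. \<not> recurrent P1 u}" and h = "\<lambda>s. hit_time P1 s t",
        simplified])
    show "0 \<le> polP P0 P1 \<pi> y v" "0 \<le> \<nu> y" "(\<Sum>y\<in>UNIV. \<nu> y * polP P0 P1 \<pi> y v) = \<nu> v"
      "0 \<le> hit_time P1 v t" for y v
      using stochastic_polP[OF stoch0 stoch1] inv hit_time_nonneg[OF stoch1 reach_recurrent1[OF t]]
      by (simp_all add: stochastic_def invariant_distribution_def)
    show "(\<Sum>v\<in>UNIV. polP P0 P1 \<pi> y v * hit_time P1 v t) = hit_time P1 y t - 1"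
      if transient: "\<not> recurrent P1 y" and pos: "0 < \<nu> y" for y
    proof -
      have "y \<noteq> t"
        using transient t by auto
      then have P1_step: "(\<Sum>v\<in>UNIV. P1 y v * hit_time P1 v t) = hit_time P1 y t - 1"
        using hit_time_first_step[OF stoch1 reach_recurrent1[OF t]] by simp
      show ?thesis
      proof (cases "y \<in> \<pi>")
        case False
        then show ?thesis
          using advantage_zero_hit_time_eq[OF tight t g_upper g_lower zero_adv[OF pos False]] P1_step
          by (simp add: polP_def)
      qed (simp add: polP_def P1_step)
    qed
    show "polP P0 P1 \<pi> y v = 0" if "recurrent P1 y" "0 < \<nu> y" "\<not> recurrent P1 v" for y v
    proof -
      have "polP P0 P1 \<pi> y = P1 y"
        using switching_transient[OF that(2)] that(1) by (auto simp: polP_def)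
      moreover have "\<not> 0 < P1 y v"
        using recurrent_reach[OF stoch1 that(1) reach_step] that(3) by blast
      ultimately show ?thesis
        using stoch1 by (simp add: stochastic_def order_less_le)
    qed
  qed (rule switching_transient[OF x])
  with x(1) show False
    by simp
qed

lemma invariant_policy_bias_nonneg:
  assumes inv: "invariant_distribution (polP P0 P1 \<pi>) \<nu>" and gap0: "\<And>u. 0 < \<nu> u \<Longrightarrow> gap \<pi> u = 0"
  shows "0 \<le> (\<Sum>u\<in>UNIV. \<nu> u * b u)"
proof (cases "\<exists>x. 0 < \<nu> x \<and> x \<notin> \<pi> \<and> P0 x \<noteq> P1 x")
  case False
  then have "(\<Sum>u\<in>UNIV. \<nu> u * b u) = 0"
    by (intro invariant_policy_bias_zero[OF inv]) blast
  then show ?thesis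
    by simp
next
  case True
  then obtain x where x: "0 < \<nu> x" "x \<notin> \<pi>" "P0 x \<noteq> P1 x"
    by blast
  then have tight: "span b = span r1 * diameter P1"
    using gap0[OF x(1)] advantage_zero(2) by (simp add: gap_def)
  consider "span b = 0" | "g = Min (range r1) - lam" | "0 < span b" "g = Max (range r1) - lam"
    | "0 < span b" "Min (range r1) - lam < g" "g < Max (range r1) - lam"
    using gain_bounds span_nonneg[of b] by fastforce
  then show ?thesis
  proof cases
    case 1
    then show ?thesis
      by (simp add: bias_zero_if_span_zero)
  next
    case 2
    then show ?thesis
      using inv bias_nonneg_if_gain_min[OF tight]
      by (auto simp: invariant_distribution_def intro!: sum_nonneg)
  next
    case 3
    then show ?thesis
      using gain_max_no_switch[OF inv gap0 x] by blast
  next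
    case 4
    then show ?thesis
      using gain_interior_no_switch[OF inv gap0 x tight] by blast
  qed
qed


lemma gain_policy:
  "gain (polP P0 P1 \<pi>) (polr r0 r1 lam \<pi>) s = g - (\<Sum>u\<in>UNIV. cesaro_limit (polP P0 P1 \<pi>) s u * gap \<pi> u)"
  by (rule gain_eq_of_gap[OF stochastic_polP[OF stoch0 stoch1] policy_reward_eq])

lemma gain_policy_le: "gain (polP P0 P1 \<pi>) (polr r0 r1 lam \<pi>) s \<le> g"
  unfolding gain_policy
  by (simp add: sum_nonneg gap_nonneg cesaro_limit_nonneg[OF stochastic_polP[OF stoch0 stoch1]])

lemma bias_policy_le:
  assumes "\<And>s. g \<le> gain (polP P0 P1 \<pi>) (polr r0 r1 lam \<pi>) s"
  shows "bias (polP P0 P1 \<pi>) (polr r0 r1 lam \<pi>) s \<le> b s"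
proof -
  note stoch = stochastic_polP[OF stoch0 stoch1, of \<pi>]
  let ?\<nu> = "cesaro_limit (polP P0 P1 \<pi>) s"
  have gain: "gain (polP P0 P1 \<pi>) (polr r0 r1 lam \<pi>) s' = g" for s'
    using assms[of s'] gain_policy_le[of \<pi> s'] by simp
  have "(\<Sum>u\<in>UNIV. ?\<nu> u * gap \<pi> u) = 0"
    using gain[of s] by (simp add: gain_policy)
  then have "\<forall>u\<in>UNIV. ?\<nu> u * gap \<pi> u = 0"
    by (subst (asm) sum_nonneg_eq_0_iff) (simp_all add: cesaro_limit_nonneg[OF stoch] gap_nonneg)
  then have "gap \<pi> u = 0" if "0 < ?\<nu> u" for u
    using that by force
  then have "0 \<le> (\<Sum>u\<in>UNIV. ?\<nu> u * b u)"
    by (rule invariant_policy_bias_nonneg[OF invariant_distribution_cesaro_limit[OF stoch]])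
  moreover have "bias (polP P0 P1 \<pi>) (polr r0 r1 lam \<pi>) s \<le> b s - (\<Sum>u\<in>UNIV. ?\<nu> u * b u)"
    by (rule bias_le_of_gap[OF stoch policy_reward_eq gap_nonneg gain])
  ultimately show ?thesis
    by simp
qed

lemma bias_opt_all_active: "bias_opt P0 P1 r0 r1 lam UNIV"
proof -
  have gain_UNIV: "gain (polP P0 P1 UNIV) (polr r0 r1 lam UNIV) s = g"
    and bias_UNIV: "bias (polP P0 P1 UNIV) (polr r0 r1 lam UNIV) = b" for s
    by (simp_all add: gain_all_active b_def)
  show ?thesis
    unfolding bias_opt_def gain_opt_def gain_UNIV bias_UNIV
  proof (intro conjI allI impI)
    show "gain (polP P0 P1 \<pi>) (polr r0 r1 lam \<pi>) s \<le> g" for \<pi> s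
      by (rule gain_policy_le)
    fix \<pi> s
    assume "\<forall>\<pi>' s. gain (polP P0 P1 \<pi>') (polr r0 r1 lam \<pi>') s \<le> gain (polP P0 P1 \<pi>) (polr r0 r1 lam \<pi>) s"
    then have "g \<le> gain (polP P0 P1 \<pi>) (polr r0 r1 lam \<pi>) s'" for s'
      using gain_UNIV by metis
    then show "bias (polP P0 P1 \<pi>) (polr r0 r1 lam \<pi>) s \<le> b s"
      by (rule bias_policy_le)
  qed
qed

end

theorem bias_opt_always_active:
  assumes "stochastic P0" and "stochastic P1" and "unichain P1"
    and "lam \<le> - vnorm (\<lambda>s. r1 s - r0 s) - span r1 * diameter P1 * mnorm (\<lambda>s s'. P1 s s' - P0 s s') / 2"
  shows "bias_opt P0 P1 r0 r1 lam UNIV"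
proof -
  fix s
  interpret all_active P0 P1 r0 r1 lam "cesaro_limit P1 s"
    using assms by unfold_locales (simp_all add: invariant_distribution_cesaro_limit)
  show ?thesis
    by (rule bias_opt_all_active)
qed

section \<open>Exchanging the actions\<close>

lemma polP_swap: "polP P1 P0 \<pi> = polP P0 P1 (- \<pi>)"
  by (auto simp: polP_def fun_eq_iff)

lemma polr_swap: "polr r1 r0 (- lam) \<pi> = (\<lambda>s. polr r0 r1 lam (- \<pi>) s + lam)"
  by (auto simp: polr_def fun_eq_iff)

lemma bias_opt_swap:
  assumes "stochastic P0" and "stochastic P1"
  shows "bias_opt P1 P0 r1 r0 (- lam) \<pi> \<longleftrightarrow> bias_opt P0 P1 r0 r1 lam (- \<pi>)"
proof -
  note stoch = stochastic_polP[OF assms]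
  have gain: "gain (polP P1 P0 \<sigma>) (polr r1 r0 (- lam) \<sigma>) s = gain (polP P0 P1 (- \<sigma>)) (polr r0 r1 lam (- \<sigma>)) s + lam"
    and bias: "bias (polP P1 P0 \<sigma>) (polr r1 r0 (- lam) \<sigma>) = bias (polP P0 P1 (- \<sigma>)) (polr r0 r1 lam (- \<sigma>))"
    for \<sigma> s
    unfolding polP_swap[of P1 P0] polr_swap by (simp_all add: gain_add_const bias_add_const stoch)
  have all_compl: "(\<forall>\<sigma>. Q (- \<sigma>)) \<longleftrightarrow> (\<forall>\<sigma>. Q \<sigma>)" for Q :: "'a set \<Rightarrow> bool"
    by (metis double_compl)
  have gain_opt: "gain_opt P1 P0 r1 r0 (- lam) \<sigma> \<longleftrightarrow> gain_opt P0 P1 r0 r1 lam (- \<sigma>)" for \<sigma>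
    unfolding gain_opt_def gain using all_compl[of "\<lambda>\<sigma>. \<forall>s. gain (polP P0 P1 \<sigma>) (polr r0 r1 lam \<sigma>) s \<le> _ s"]
    by simp
  show ?thesis
    unfolding bias_opt_def gain_opt bias
    using all_compl[of "\<lambda>\<sigma>. gain_opt P0 P1 r0 r1 lam \<sigma> \<longrightarrow>
      (\<forall>s. bias (polP P0 P1 \<sigma>) (polr r0 r1 lam \<sigma>) s \<le> bias (polP P0 P1 (- \<pi>)) (polr r0 r1 lam (- \<pi>)) s)"]
    by simp
qed

lemma vnorm_diff_commute: "vnorm (\<lambda>s. r0 s - r1 s) = vnorm (\<lambda>s. r1 s - r0 s)"
  by (simp add: vnorm_def abs_minus_commute)

lemma mnorm_diff_commute: "mnorm (\<lambda>s s'. P0 s s' - P1 s s') = mnorm (\<lambda>s s'. P1 s s' - P0 s s')"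
  by (simp add: mnorm_def abs_minus_commute)

theorem mainTheorem3:
  fixes P0 P1 :: "'s::finite \<Rightarrow> 's \<Rightarrow> real" and r0 r1 :: "'s \<Rightarrow> real"
  assumes "stochastic P0" and "stochastic P1"
    and "unichain (polP P0 P1 UNIV)" and "unichain (polP P0 P1 {})"
  shows "(\<forall>lam. lam \<le> - vnorm (\<lambda>s. r1 s - r0 s)
              - span r1 * diameter P1 * mnorm (\<lambda>s s'. P1 s s' - P0 s s') / 2
            \<longrightarrow> bias_opt P0 P1 r0 r1 lam UNIV) \<and>
         (\<forall>lam. lam \<ge> vnorm (\<lambda>s. r1 s - r0 s)
              + span r0 * diameter P0 * mnorm (\<lambda>s s'. P1 s s' - P0 s s') / 2
            \<longrightarrow> bias_opt P0 P1 r0 r1 lam {})"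
proof (intro conjI allI impI)
  fix lam :: real
  assume "lam \<le> - vnorm (\<lambda>s. r1 s - r0 s) - span r1 * diameter P1 * mnorm (\<lambda>s s'. P1 s s' - P0 s s') / 2"
  then show "bias_opt P0 P1 r0 r1 lam UNIV"
    using bias_opt_always_active assms by simp
next
  fix lam :: real
  assume "lam \<ge> vnorm (\<lambda>s. r1 s - r0 s) + span r0 * diameter P0 * mnorm (\<lambda>s s'. P1 s s' - P0 s s') / 2"
  then have "- lam \<le> - vnorm (\<lambda>s. r0 s - r1 s) - span r0 * diameter P0 * mnorm (\<lambda>s s'. P0 s s' - P1 s s') / 2"
    unfolding vnorm_diff_commute[of r0 r1] mnorm_diff_commute[of P0 P1] by linarith
  then have "bias_opt P1 P0 r1 r0 (- lam) UNIV"
    using bias_opt_always_active assms by simp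
  then show "bias_opt P0 P1 r0 r1 lam {}"
    using bias_opt_swap[OF assms(1,2), of r1 r0 lam UNIV] by simp
qed

end
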